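(* Let $j\in\mathbb Z$, and let $\lambda,\mu$ be partitions such that $\lambda$ has an addable node $\mathfrak l$ in column $j$ and $\mu$ has an addable node $\mathfrak m$ in column $j$; set $\lambda^+=\lambda\cup\{\mathfrak l\}$, $\mu^+=\mu\cup\{\mathfrak m\}$. Then $\mathrm e_{\lambda\mu}=\mathrm e_{\lambda\mu^+}+\mathrm e_{\lambda^+\mu^+}$.
   Context: Partitions are identified with Young diagrams $\{(a,b)\in\mathbb N^2:b\le\lambda_a\}$; nodes are elements of $\mathbb N^2$; $(a,b)$ has height $a+b$ and lies in column $b-a$ (smaller column = further left). An addable node of $\lambda$ is a node not in $\lambda$ whose addition gives a partition. $\mathtt{NE}(\mathfrak n)=\mathfrak n+(0,1)$, $\mathtt{SW}(\mathfrak n)=\mathfrak n-(0,1)$, $\mathtt{SE}(\mathfrak n)=\mathfrak n-(1,0)$. A tile is a finite nonempty set of nodes orderable $\mathfrak n_1,\dots,\mathfrak n_r$ with $\mathfrak n_{i+1}\in\{\mathtt{NE}(\mathfrak n_i),\mathtt{SE}(\mathfrak n_i)\}$; start = leftmost node, end = rightmost node; Dyck tile if start and end both attain the maximal height of its nodes. A Dyck tiling of $\lambda\setminus\mu$ is a partition of it into Dyck tiles. It is cover-expansive if whenever $\mathfrak a,\mathtt{SE}(\mathfrak a)\in\lambda\setminus\mu$, the tile of $\mathtt{SE}(\mathfrak a)$ starts weakly left of the start of the tile of $\mathfrak a$, and whenever $\mathfrak a,\mathtt{SW}(\mathfrak a)\in\lambda\setminus\mu$, the tile of $\mathtt{SW}(\mathfrak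 a)$ ends weakly right of the end of the tile of $\mathfrak a$. $\mathrm e_{\lambda\mu}$ is the number of cover-expansive Dyck tilings of $\lambda\setminus\mu$ if $\lambda\supseteq\mu$, and $0$ otherwise. *)

theory Defs
  imports Main
begin

text \<open>Nodes are pairs of integers; valid nodes (elements of N^2, N = positive integers)
  are those with both coordinates at least 1. A partition is identified with its
  Young diagram {(a,b). 1 <= a, 1 <= b <= lambda_a}, i.e. a finite set of valid nodes
  closed downwards in both coordinates.\<close>

type_synonym node = "int \<times> int"

definition valid_node :: "node \<Rightarrow> bool" where
  "valid_node n \<longleftrightarrow> fst n \<ge> 1 \<and> snd n \<ge> 1"

definition is_partition :: "node set \<Rightarrow> bool" where
  "is_partition S \<longleftrightarrow> finite S \<and> (\<forall>n\<in>S. valid_node n) \<and>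
     (\<forall>a b a' b'. (a, b) \<in> S \<and> 1 \<le> a' \<and> a' \<le> a \<and> 1 \<le> b' \<and> b' \<le> b \<longrightarrow> (a', b') \<in> S)"

definition height :: "node \<Rightarrow> int" where
  "height n = fst n + snd n"

definition column :: "node \<Rightarrow> int" where
  "column n = snd n - fst n"

definition addable :: "node set \<Rightarrow> node \<Rightarrow> bool" where
  "addable S n \<longleftrightarrow> valid_node n \<and> n \<notin> S \<and> is_partition (insert n S)"

definition NE :: "node \<Rightarrow> node" where "NE n = (fst n, snd n + 1)"
definition SW :: "node \<Rightarrow> node" where "SW n = (fst n, snd n - 1)"
definition SE :: "node \<Rightarrow> node" where "SE n = (fst n - 1, snd n)"

definition is_tile :: "node set \<Rightarrow> bool" where
  "is_tile T \<longleftrightarrow> finite T \<and> T \<noteq> {} \<and> (\<forall>n\<in>T. valid_node n) \<and>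
     (\<exists>ns. distinct ns \<and> set ns = T \<and>
        (\<forall>i. Suc i < length ns \<longrightarrow> ns ! Suc i \<in> {NE (ns ! i), SE (ns ! i)}))"

definition tile_start :: "node set \<Rightarrow> node" where
  "tile_start T = (THE n. n \<in> T \<and> (\<forall>m\<in>T. column n \<le> column m))"

definition tile_end :: "node set \<Rightarrow> node" where
  "tile_end T = (THE n. n \<in> T \<and> (\<forall>m\<in>T. column m \<le> column n))"

definition is_dyck_tile :: "node set \<Rightarrow> bool" where
  "is_dyck_tile T \<longleftrightarrow> is_tile T \<and>
     height (tile_start T) = Max (height ` T) \<and> height (tile_end T) = Max (height ` T)"

definition dyck_tiling :: "node set \<Rightarrow> node set \<Rightarrow> node set set \<Rightarrow> bool" where
  "dyck_tiling lam mu P \<longleftrightarrow> (\<forall>T\<in>P. is_dyck_tile T) \<and> \<Union>P = lam - mu \<and>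
     (\<forall>T\<in>P. \<forall>T'\<in>P. T \<noteq> T' \<longrightarrow> T \<inter> T' = {})"

definition tile_of :: "node set set \<Rightarrow> node \<Rightarrow> node set" where
  "tile_of P n = (THE T. T \<in> P \<and> n \<in> T)"

definition cover_expansive :: "node set \<Rightarrow> node set \<Rightarrow> node set set \<Rightarrow> bool" where
  "cover_expansive lam mu P \<longleftrightarrow>
     (\<forall>a. a \<in> lam - mu \<and> SE a \<in> lam - mu \<longrightarrow>
        column (tile_start (tile_of P (SE a))) \<le> column (tile_start (tile_of P a))) \<and>
     (\<forall>a. a \<in> lam - mu \<and> SW a \<in> lam - mu \<longrightarrow>
        column (tile_end (tile_of P a)) \<le> column (tile_end (tile_of P (SW a))))"

definition e_num :: "node set \<Rightarrow> node set \<Rightarrow> nat" where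
  "e_num lam mu = (if mu \<subseteq> lam
     then card {P. dyck_tiling lam mu P \<and> cover_expansive lam mu P} else 0)"

end

theory Submission
  imports Defs
begin

text \<open>
  On the convex region \<open>\<lambda> - \<mu>\<close>, cover-expansiveness of a Dyck tiling is equivalent to a local
  condition: a node whose NW (resp. NE) neighbour lies in the region is not the first (last) node
  of its tile. Let \<open>m = d\<^sub>0, d\<^sub>1, \<dots>, d\<^sub>n\<^sub>+\<^sub>1 = l\<close> be the nodes of the common column between
  the two addable nodes. In every such tiling of \<open>\<lambda> - \<mu>\<close> the nodes \<open>d\<^sub>0, \<dots>, d\<^sub>n\<close> are valleys
  of their tiles. If the tile through \<open>d\<^sub>n\<close> rises only one step above \<open>d\<^sub>n\<close>, cutting it at \<open>d\<^sub>n\<close>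
  and moving \<open>d\<^sub>0, \<dots>, d\<^sub>n\<^sub>-\<^sub>1\<close> one diagonal step up gives a tiling of \<open>\<lambda> - \<mu>\<^sup>+\<close>; otherwise every
  tile through a \<open>d\<^sub>t\<close> rises at least two steps above it, and moving \<open>d\<^sub>0, \<dots>, d\<^sub>n\<close> up gives a
  tiling of \<open>\<lambda>\<^sup>+ - \<mu>\<^sup>+\<close>. Moving the diagonal back down (and, in the first case, joining the two
  tiles next to \<open>d\<^sub>n\<close> through it) inverts both maps.
\<close>

section \<open>Tiles as column paths\<close>

definition column_path :: "node set \<Rightarrow> bool" where
 "column_path T \<longleftrightarrow> finite T \<and> T \<noteq> {} \<and> (\<forall>x\<in>T. valid_node x) \<and>
   (\<forall>x\<in>T. \<forall>y\<in>T. column x = column y \<longrightarrow> x = y) \<and>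
   (\<forall>x\<in>T. \<forall>y\<in>T. \<forall>c. column x \<le> c \<and> c \<le> column y \<longrightarrow> (\<exists>z\<in>T. column z = c)) \<and>
   (\<forall>x\<in>T. \<forall>y\<in>T. column y = column x + 1 \<longrightarrow> y = NE x \<or> y = SE x)"

lemma chain_column:
  assumes "\<forall>i. Suc i < length ns \<longrightarrow> ns ! Suc i \<in> {NE (ns ! i), SE (ns ! i)}"
  shows "i < length ns \<Longrightarrow> column (ns ! i) = column (ns ! 0) + int i"
proof (induction i)
  case 0 then show ?case by simp
next
  case (Suc i)
  then have "ns ! Suc i \<in> {NE (ns ! i), SE (ns ! i)}" using assms by auto
  then have "column (ns ! Suc i) = column (ns ! i) + 1"
    by (auto simp: NE_def SE_def column_def)
  then show ?case using Suc by simp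
qed

lemma column_path_if_is_tile: "is_tile T \<Longrightarrow> column_path T"
proof -
  assume "is_tile T"
  then obtain ns where T: "finite T" "T \<noteq> {}" "\<forall>n\<in>T. valid_node n" "distinct ns" "set ns = T"
    and ch: "\<forall>i. Suc i < length ns \<longrightarrow> ns ! Suc i \<in> {NE (ns ! i), SE (ns ! i)}"
    by (auto simp: is_tile_def)
  have cc: "\<And>i. i < length ns \<Longrightarrow> column (ns ! i) = column (ns ! 0) + int i"
    using chain_column[OF ch] by blast
  have mem: "\<exists>i<length ns. x = ns ! i" if "x \<in> T" for x
  proof -
    have "x \<in> set ns" using T(5) that by simp
    then show ?thesis unfolding in_set_conv_nth by metis
  qed
  show "column_path T" unfolding column_path_def
  proof (intro conjI ballI allI impI)
    show "finite T" "T \<noteq> {}" using T by auto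
  next
    fix x assume "x \<in> T" then show "valid_node x" using T by auto
  next
    fix x y assume "x \<in> T" "y \<in> T" "column x = column y"
    then obtain i i' where "i < length ns" "i' < length ns" "x = ns ! i" "y = ns ! i'"
      using mem by blast
    then show "x = y" using cc \<open>column x = column y\<close> by auto
  next
    fix x y c assume a: "x \<in> T" "y \<in> T" "column x \<le> c \<and> c \<le> column y"
    then obtain i i' where i: "i < length ns" "i' < length ns" "x = ns ! i" "y = ns ! i'"
      using mem by blast
    define r where "r = nat (c - column (ns ! 0))"
    have "c = column (ns ! 0) + int r" using a i cc unfolding r_def by auto
    moreover have "r < length ns" using a i cc unfolding r_def by auto
    ultimately show "\<exists>z\<in>T. column z = c" using cc T(5) by (intro bexI[of _ "ns ! r"]) auto
  next
    fix x y assume a: "x \<in> T" "y \<in> T" "column y = column x + 1"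
    then obtain i i' where i: "i < length ns" "i' < length ns" "x = ns ! i" "y = ns ! i'"
      using mem by blast
    then have "i' = Suc i" using cc a by auto
    then show "y = NE x \<or> y = SE x" using ch i by auto
  qed
qed

lemma convex_int_set_eq:
  fixes S :: "int set"
  assumes fin: "finite S" and ne: "S \<noteq> {}" and cv: "\<And>a b c. a \<in> S \<Longrightarrow> b \<in> S \<Longrightarrow> a \<le> c \<Longrightarrow> c \<le> b \<Longrightarrow> c \<in> S"
  shows "S = {Min S..<Min S + int (card S)}"
proof (rule card_subset_eq)
  show "S \<subseteq> {Min S..<Min S + int (card S)}"
  proof
    fix c assume cS: "c \<in> S"
    have "c < Min S + int (card S)"
    proof (rule ccontr)
      assume c: "\<not> c < Min S + int (card S)"
      have "{Min S..c} \<subseteq> S" using cv[OF Min_in[OF fin ne] cS] by auto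
      then have "card {Min S..c} \<le> card S" using fin by (rule card_mono[rotated])
      then show False using c by auto
    qed
    then show "c \<in> {Min S..<Min S + int (card S)}" using Min_le[OF fin cS] by auto
  qed
qed simp_all

lemma is_tile_if_column_path: "column_path T \<Longrightarrow> is_tile T"
proof -
  assume p: "column_path T"
  then have fin: "finite T" and ne: "T \<noteq> {}" and inj: "\<And>x y. x\<in>T \<Longrightarrow> y\<in>T \<Longrightarrow> column x = column y \<Longrightarrow> x = y"
    and itv: "\<And>x y c. x\<in>T \<Longrightarrow> y\<in>T \<Longrightarrow> column x \<le> c \<Longrightarrow> c \<le> column y \<Longrightarrow> \<exists>z\<in>T. column z = c"
    and adj: "\<And>x y. x\<in>T \<Longrightarrow> y\<in>T \<Longrightarrow> column y = column x + 1 \<Longrightarrow> y = NE x \<or> y = SE x"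
    unfolding column_path_def by blast+
  define S where "S = column ` T"
  define c0 where "c0 = Min S"
  define n where "n = card T"
  have cardS: "card S = n" unfolding S_def n_def by (rule card_image) (use inj in \<open>auto simp: inj_on_def\<close>)
  have Seq: "S = {c0..<c0 + int n}"
    unfolding c0_def cardS[symmetric]
  proof (rule convex_int_set_eq)
    show "finite S" "S \<noteq> {}" using fin ne unfolding S_def by auto
    show "c \<in> S" if abc: "a \<in> S" "b \<in> S" "a \<le> c" "c \<le> b" for a b c
    proof -
      obtain x y where "x \<in> T" "y \<in> T" "a = column x" "b = column y" using abc(1,2) unfolding S_def by blast
      then obtain z where "z \<in> T" "column z = c" using itv abc(3,4) by metis
      then show ?thesis unfolding S_def by blast
    qed
  qed
  define nd where "nd = (\<lambda>c. THE x. x \<in> T \<and> column x = c)"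
  have nd: "\<And>c. c \<in> S \<Longrightarrow> nd c \<in> T \<and> column (nd c) = c"
  proof -
    fix c assume "c \<in> S"
    then obtain x where "x \<in> T" "column x = c" unfolding S_def by auto
    then have "\<exists>!x. x \<in> T \<and> column x = c" using inj by auto
    then show "nd c \<in> T \<and> column (nd c) = c" unfolding nd_def by (rule theI')
  qed
  define ns where "ns = map (\<lambda>i. nd (c0 + int i)) [0..<n]"
  have ln: "length ns = n" unfolding ns_def by simp
  have nth: "\<And>i. i < n \<Longrightarrow> ns ! i \<in> T \<and> column (ns ! i) = c0 + int i"
    unfolding ns_def using nd Seq by auto
  show "is_tile T" unfolding is_tile_def
  proof (intro conjI exI[of _ ns])
    show "finite T" "T \<noteq> {}" using fin ne by auto
    show "\<forall>n\<in>T. valid_node n" using p unfolding column_path_def by blast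
    show "distinct ns" unfolding distinct_conv_nth ln
    proof (intro allI impI)
      fix i i' assume "i < n" "i' < n" "i \<noteq> i'"
      then have "column (ns ! i) \<noteq> column (ns ! i')" using nth by auto
      then show "ns ! i \<noteq> ns ! i'" by metis
    qed
    show "set ns = T"
    proof
      show "set ns \<subseteq> T"
      proof
        fix x assume "x \<in> set ns"
        then obtain i where "i < length ns" "x = ns ! i" by (auto simp: in_set_conv_nth)
        then show "x \<in> T" using nth ln by auto
      qed
      show "T \<subseteq> set ns"
      proof
        fix x assume x: "x \<in> T"
        then have "column x \<in> S" unfolding S_def by auto
        define i where "i = nat (column x - c0)"
        have i: "i < n" "column x = c0 + int i" using \<open>column x \<in> S\<close> unfolding Seq i_def by auto
        then have "ns ! i = x" using nth inj x by auto
        then show "x \<in> set ns" using i ln by (auto simp: in_set_conv_nth)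
      qed
    qed
    show "\<forall>i. Suc i < length ns \<longrightarrow> ns ! Suc i \<in> {NE (ns ! i), SE (ns ! i)}"
      using nth adj ln by auto
  qed
qed

lemma is_tile_iff_column_path: "is_tile T \<longleftrightarrow> column_path T" using column_path_if_is_tile is_tile_if_column_path by blast

definition peak :: "node set \<Rightarrow> int" where "peak T = Max (height ` T)"

definition NW :: "node \<Rightarrow> node" where "NW n = (fst n + 1, snd n)"

lemmas node_defs = NE_def SE_def SW_def NW_def column_def height_def

lemma SE_NW: "SE (NW x) = x" by (simp add: node_defs)

lemma SW_ne_NW: "SW x \<noteq> NW x" by (simp add: node_defs prod_eq_iff)

lemma NE_SW: "NE (SW x) = x" by (simp add: node_defs)

lemma SW_NE: "SW (NE x) = x" by (simp add: node_defs)

lemma NW_SE: "NW (SE x) = x" by (simp add: node_defs)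

lemma height_NW[simp]: "height (NW x) = height x + 1" by (simp add: node_defs)

lemma height_SW[simp]: "height (SW x) = height x - 1" by (simp add: node_defs)

lemma height_NE[simp]: "height (NE x) = height x + 1" by (simp add: node_defs)

lemma height_SE[simp]: "height (SE x) = height x - 1" by (simp add: node_defs)

lemma column_NW[simp]: "column (NW x) = column x - 1" by (simp add: node_defs)

lemma column_SW[simp]: "column (SW x) = column x - 1" by (simp add: node_defs)

lemma column_NE[simp]: "column (NE x) = column x + 1" by (simp add: node_defs)

lemma column_SE[simp]: "column (SE x) = column x + 1" by (simp add: node_defs)

definition dyck_tiling_on :: "node set \<Rightarrow> node set set \<Rightarrow> bool" where
 "dyck_tiling_on E P \<longleftrightarrow> (\<forall>T\<in>P. is_dyck_tile T) \<and> \<Union>P = E \<and> (\<forall>T\<in>P. \<forall>T'\<in>P. T \<noteq> T' \<longrightarrow> T \<inter> T' = {})"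

definition linked :: "node set set \<Rightarrow> node \<Rightarrow> node \<Rightarrow> bool" where
 "linked P x y \<longleftrightarrow> (\<exists>T\<in>P. x \<in> T \<and> y \<in> T \<and> column y = column x + 1)"

definition locally_linked :: "node set \<Rightarrow> node set set \<Rightarrow> bool" where
 "locally_linked E P \<longleftrightarrow> (\<forall>x\<in>E. NW x \<in> E \<longrightarrow> (\<exists>w. linked P w x)) \<and> (\<forall>x\<in>E. NE x \<in> E \<longrightarrow> (\<exists>y. linked P x y))"

definition cover_expansive_on :: "node set \<Rightarrow> node set set \<Rightarrow> bool" where
  "cover_expansive_on E P \<longleftrightarrow>
     (\<forall>a. a \<in> E \<and> SE a \<in> E \<longrightarrow>
        column (tile_start (tile_of P (SE a))) \<le> column (tile_start (tile_of P a))) \<and>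
     (\<forall>a. a \<in> E \<and> SW a \<in> E \<longrightarrow>
        column (tile_end (tile_of P a)) \<le> column (tile_end (tile_of P (SW a))))"

definition start_col :: "node set set \<Rightarrow> node \<Rightarrow> int" where "start_col P x = column (tile_start (tile_of P x))"

definition end_col :: "node set set \<Rightarrow> node \<Rightarrow> int" where "end_col P x = column (tile_end (tile_of P x))"

lemma cover_expansive_eq_on: "cover_expansive lam mu P = cover_expansive_on (lam - mu) P"
  unfolding cover_expansive_def cover_expansive_on_def by simp

lemma dyck_tiling_eq_on: "dyck_tiling lam mu P = dyck_tiling_on (lam - mu) P"
  unfolding dyck_tiling_def dyck_tiling_on_def by simp

lemma column_path_min_max:
  assumes "column_path T"
  shows "\<exists>x\<in>T. \<forall>y\<in>T. column x \<le> column y" "\<exists>x\<in>T. \<forall>y\<in>T. column y \<le> column x"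
proof -
  have f: "finite (column ` T)" "column ` T \<noteq> {}" using assms unfolding column_path_def by auto
  obtain x where "x \<in> T" "column x = Min (column ` T)" using Min_in[OF f] by auto
  moreover have "\<forall>y\<in>T. column x \<le> column y" using Min_le[OF f(1)] \<open>column x = _\<close> by simp
  ultimately show "\<exists>x\<in>T. \<forall>y\<in>T. column x \<le> column y" by blast
  obtain x where "x \<in> T" "column x = Max (column ` T)" using Max_in[OF f] by auto
  moreover have "\<forall>y\<in>T. column y \<le> column x" using Max_ge[OF f(1)] \<open>column x = _\<close> by simp
  ultimately show "\<exists>x\<in>T. \<forall>y\<in>T. column y \<le> column x" by blast
qed

lemma column_path_column_inj: "column_path T \<Longrightarrow> x \<in> T \<Longrightarrow> y \<in> T \<Longrightarrow> column x = column y \<Longrightarrow> x = y"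
  unfolding column_path_def by blast

lemma column_path_interval: "column_path T \<Longrightarrow> x \<in> T \<Longrightarrow> y \<in> T \<Longrightarrow> column x \<le> c \<Longrightarrow> c \<le> column y \<Longrightarrow> \<exists>z\<in>T. column z = c"
  unfolding column_path_def by blast

lemma column_path_adjacent: "column_path T \<Longrightarrow> x \<in> T \<Longrightarrow> y \<in> T \<Longrightarrow> column y = column x + 1 \<Longrightarrow> y = NE x \<or> y = SE x"
  unfolding column_path_def by blast

lemma tile_start_eqI:
  assumes "column_path T" "x \<in> T" "\<forall>y\<in>T. column x \<le> column y"
  shows "tile_start T = x"
proof -
  have "\<exists>!x. x \<in> T \<and> (\<forall>m\<in>T. column x \<le> column m)"
    using assms column_path_column_inj[OF assms(1)] by (metis order_antisym)
  then show ?thesis unfolding tile_start_def by (rule the1_equality) (use assms in auto)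
qed

lemma tile_end_eqI:
  assumes "column_path T" "x \<in> T" "\<forall>y\<in>T. column y \<le> column x"
  shows "tile_end T = x"
proof -
  have "\<exists>!x. x \<in> T \<and> (\<forall>m\<in>T. column m \<le> column x)"
    using assms column_path_column_inj[OF assms(1)] by (metis order_antisym)
  then show ?thesis unfolding tile_end_def by (rule the1_equality) (use assms in auto)
qed

lemma tile_start_least: "column_path T \<Longrightarrow> tile_start T \<in> T \<and> (\<forall>y\<in>T. column (tile_start T) \<le> column y)"
  using column_path_min_max(1) tile_start_eqI by metis

lemma tile_end_greatest: "column_path T \<Longrightarrow> tile_end T \<in> T \<and> (\<forall>y\<in>T. column y \<le> column (tile_end T))"
  using column_path_min_max(2) tile_end_eqI by metis

lemma column_path_finite: "column_path T \<Longrightarrow> finite T" unfolding column_path_def by blast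

lemma column_path_valid: "column_path T \<Longrightarrow> x \<in> T \<Longrightarrow> valid_node x" unfolding column_path_def by blast

lemma peak_ge: "column_path T \<Longrightarrow> x \<in> T \<Longrightarrow> height x \<le> peak T"
  unfolding peak_def using column_path_finite by simp

lemma is_dyck_tile_iff: "is_dyck_tile T \<longleftrightarrow> column_path T \<and> height (tile_start T) = peak T \<and> height (tile_end T) = peak T"
  unfolding is_dyck_tile_def is_tile_iff_column_path peak_def by simp

section \<open>Dyck tilings and links between consecutive nodes\<close>

context
  fixes E P assumes tl: "dyck_tiling_on E P"
begin

lemma tiling_column_path: "T \<in> P \<Longrightarrow> column_path T"
  using tl unfolding dyck_tiling_on_def is_dyck_tile_iff by blast

lemma tiling_peak_ends: "T \<in> P \<Longrightarrow> height (tile_start T) = peak T \<and> height (tile_end T) = peak T"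
  using tl unfolding dyck_tiling_on_def is_dyck_tile_iff by blast

lemma tiling_Union: "\<Union>P = E" using tl unfolding dyck_tiling_on_def by blast

lemma tiling_subset: "T \<in> P \<Longrightarrow> T \<subseteq> E" using tiling_Union by blast

lemma tiling_same_tile: "T \<in> P \<Longrightarrow> T' \<in> P \<Longrightarrow> x \<in> T \<Longrightarrow> x \<in> T' \<Longrightarrow> T = T'"
  using tl unfolding dyck_tiling_on_def by blast

lemma tile_of_eqI: "T \<in> P \<Longrightarrow> x \<in> T \<Longrightarrow> tile_of P x = T"
  unfolding tile_of_def using tiling_same_tile by (metis (mono_tags, lifting) the_equality)

lemma tile_of_mem: "x \<in> E \<Longrightarrow> tile_of P x \<in> P \<and> x \<in> tile_of P x"
  using tile_of_eqI tiling_Union by blast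

lemma linkedD: "linked P x y \<Longrightarrow> x \<in> E \<and> y \<in> E \<and> column y = column x + 1 \<and> (y = NE x \<or> y = SE x) \<and> tile_of P x = tile_of P y"
proof -
  assume "linked P x y"
  then obtain T where T: "T \<in> P" "x \<in> T" "y \<in> T" "column y = column x + 1" unfolding linked_def by blast
  then show ?thesis using tiling_subset[OF T(1)] column_path_adjacent[OF tiling_column_path[OF T(1)] T(2,3,4)] tile_of_eqI[OF T(1)] by auto
qed

lemma linked_pred_cases: "linked P w x \<Longrightarrow> w = SW x \<or> w = NW x"
  using linkedD[of w x] by (cases w, cases x) (auto simp: node_defs)

lemma linked_succ_unique: "linked P x y \<Longrightarrow> linked P x y' \<Longrightarrow> y = y'"
proof -
  assume "linked P x y" "linked P x y'"
  then obtain T T' where "T \<in> P" "x \<in> T" "y \<in> T" "column y = column x + 1"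
    "T' \<in> P" "x \<in> T'" "y' \<in> T'" "column y' = column x + 1" unfolding linked_def by blast
  then show ?thesis using tiling_same_tile[of T T' x] column_path_column_inj[OF tiling_column_path, of T y y'] by simp
qed

lemma linked_pred_unique: "linked P x y \<Longrightarrow> linked P x' y \<Longrightarrow> x = x'"
proof -
  assume "linked P x y" "linked P x' y"
  then obtain T T' where "T \<in> P" "x \<in> T" "y \<in> T" "column y = column x + 1"
    "T' \<in> P" "x' \<in> T'" "y \<in> T'" "column y = column x' + 1" unfolding linked_def by blast
  then show ?thesis using tiling_same_tile[of T T' y] column_path_column_inj[OF tiling_column_path, of T x x'] by simp
qed

lemma linked_start_col: "linked P x y \<Longrightarrow> start_col P x = start_col P y"
  unfolding start_col_def using linkedD by simp

lemma linked_end_col: "linked P x y \<Longrightarrow> end_col P x = end_col P y"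
  unfolding end_col_def using linkedD by simp

lemma start_col_le: "x \<in> E \<Longrightarrow> start_col P x \<le> column x"
  unfolding start_col_def using tile_of_mem tile_start_least tiling_column_path by blast

lemma end_col_ge: "x \<in> E \<Longrightarrow> column x \<le> end_col P x"
  unfolding end_col_def using tile_of_mem tile_end_greatest tiling_column_path by blast

lemma pred_exists: "T \<in> P \<Longrightarrow> x \<in> T \<Longrightarrow> column (tile_start T) < column x \<Longrightarrow> \<exists>w\<in>T. linked P w x"
proof -
  assume a: "T \<in> P" "x \<in> T" "column (tile_start T) < column x"
  have "tile_start T \<in> T" using tile_start_least tiling_column_path a by blast
  have "\<exists>z\<in>T. column z = column x - 1" by (rule column_path_interval[OF tiling_column_path[OF a(1)] \<open>tile_start T \<in> T\<close> a(2)]) (use a in auto)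
  then obtain w where "w \<in> T" "column w = column x - 1" by blast
  then show ?thesis unfolding linked_def using a by force
qed

lemma succ_exists: "T \<in> P \<Longrightarrow> x \<in> T \<Longrightarrow> column x < column (tile_end T) \<Longrightarrow> \<exists>y\<in>T. linked P x y"
proof -
  assume a: "T \<in> P" "x \<in> T" "column x < column (tile_end T)"
  have "tile_end T \<in> T" using tile_end_greatest tiling_column_path a by blast
  have "\<exists>z\<in>T. column z = column x + 1" by (rule column_path_interval[OF tiling_column_path[OF a(1)] a(2) \<open>tile_end T \<in> T\<close>]) (use a in auto)
  then obtain w where "w \<in> T" "column w = column x + 1" by blast
  then show ?thesis unfolding linked_def using a by force
qed

lemma has_pred_iff: "x \<in> E \<Longrightarrow> (\<exists>w. linked P w x) \<longleftrightarrow> start_col P x < column x"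
proof
  assume x: "x \<in> E" and "\<exists>w. linked P w x"
  then obtain w where "linked P w x" by blast
  then show "start_col P x < column x" using linkedD[of w x] start_col_le[of w] linked_start_col[of w x] by auto
next
  assume x: "x \<in> E" and "start_col P x < column x"
  then show "\<exists>w. linked P w x" using pred_exists[of "tile_of P x" x] tile_of_mem unfolding start_col_def by blast
qed

lemma has_succ_iff: "x \<in> E \<Longrightarrow> (\<exists>y. linked P x y) \<longleftrightarrow> column x < end_col P x"
proof
  assume x: "x \<in> E" and "\<exists>y. linked P x y"
  then obtain y where "linked P x y" by blast
  then show "column x < end_col P x" using linkedD[of x y] end_col_ge[of y] linked_end_col[of x y] by auto
next
  assume x: "x \<in> E" and "column x < end_col P x"
  then show "\<exists>y. linked P x y" using succ_exists[of "tile_of P x" x] tile_of_mem unfolding end_col_def by blast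
qed

lemma tile_end_if_no_succ:
  assumes T: "T \<in> P" and x: "x \<in> T" and no: "\<And>y. \<not> linked P x y"
  shows "tile_end T = x"
proof -
  have "\<not> column x < column (tile_end T)" using succ_exists[OF T x] no by blast
  moreover have "column x \<le> column (tile_end T)" using tile_end_greatest[OF tiling_column_path[OF T]] x by blast
  ultimately have "column (tile_end T) = column x" by simp
  then show ?thesis
    using column_path_column_inj[OF tiling_column_path[OF T] _ x] tile_end_greatest[OF tiling_column_path[OF T]] by blast
qed

lemma tile_start_if_no_pred:
  assumes T: "T \<in> P" and x: "x \<in> T" and no: "\<And>w. \<not> linked P w x"
  shows "tile_start T = x"
proof -
  have "\<not> column (tile_start T) < column x" using pred_exists[OF T x] no by blast
  moreover have "column (tile_start T) \<le> column x" using tile_start_least[OF tiling_column_path[OF T]] x by blast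
  ultimately have "column (tile_start T) = column x" by simp
  then show ?thesis
    using column_path_column_inj[OF tiling_column_path[OF T] _ x] tile_start_least[OF tiling_column_path[OF T]] by blast
qed

lemma linked_pred_in_tile: "linked P x y \<Longrightarrow> T \<in> P \<Longrightarrow> y \<in> T \<Longrightarrow> x \<in> T"
proof -
  assume a: "linked P x y" "T \<in> P" "y \<in> T"
  then obtain T' where "T' \<in> P" "x \<in> T'" "y \<in> T'" unfolding linked_def by blast
  then show ?thesis using tiling_same_tile[OF a(2) \<open>T' \<in> P\<close> a(3)] by simp
qed

lemma linked_succ_in_tile: "linked P x y \<Longrightarrow> T \<in> P \<Longrightarrow> x \<in> T \<Longrightarrow> y \<in> T"
proof -
  assume a: "linked P x y" "T \<in> P" "x \<in> T"
  then obtain T' where "T' \<in> P" "x \<in> T'" "y \<in> T'" unfolding linked_def by blast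
  then show ?thesis using tiling_same_tile[OF a(2) \<open>T' \<in> P\<close> a(3)] by simp
qed

end

section \<open>Cover-expansive tilings of convex regions\<close>

definition convex_region :: "node set \<Rightarrow> bool" where
  "convex_region E \<longleftrightarrow> (\<forall>x y z. x \<in> E \<longrightarrow> z \<in> E \<longrightarrow> fst x \<le> fst y \<longrightarrow> fst y \<le> fst z \<longrightarrow>
      snd x \<le> snd y \<longrightarrow> snd y \<le> snd z \<longrightarrow> y \<in> E)"

lemma convex_regionD: "convex_region E \<Longrightarrow> x \<in> E \<Longrightarrow> z \<in> E \<Longrightarrow> fst x \<le> fst y \<Longrightarrow> fst y \<le> fst z \<Longrightarrow>
      snd x \<le> snd y \<Longrightarrow> snd y \<le> snd z \<Longrightarrow> y \<in> E"
  unfolding convex_region_def by blast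

lemma partition_down_closed: "is_partition S \<Longrightarrow> z \<in> S \<Longrightarrow> 1 \<le> fst y \<Longrightarrow> 1 \<le> snd y \<Longrightarrow> fst y \<le> fst z \<Longrightarrow> snd y \<le> snd z \<Longrightarrow> y \<in> S"
proof -
  assume a: "is_partition S" "z \<in> S" "1 \<le> fst y" "1 \<le> snd y" "fst y \<le> fst z" "snd y \<le> snd z"
  have H: "\<And>a b a' b'. (a,b) \<in> S \<Longrightarrow> 1 \<le> a' \<Longrightarrow> a' \<le> a \<Longrightarrow> 1 \<le> b' \<Longrightarrow> b' \<le> b \<Longrightarrow> (a',b') \<in> S"
    using a(1) unfolding is_partition_def by blast
  show ?thesis using H[of "fst z" "snd z" "fst y" "snd y"] a by simp
qed

lemma partition_valid: "is_partition S \<Longrightarrow> x \<in> S \<Longrightarrow> 1 \<le> fst x \<and> 1 \<le> snd x"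
  unfolding is_partition_def valid_node_def by blast

lemma partition_finite: "is_partition S \<Longrightarrow> finite S"
  unfolding is_partition_def by blast

lemma addable_below:
  assumes "addable S a" "valid_node y" "fst y \<le> fst a" "snd y \<le> snd a" "y \<noteq> a"
  shows "y \<in> S"
proof -
  have p: "is_partition (insert a S)" and v: "valid_node a" using assms(1) unfolding addable_def by auto
  have "a \<in> insert a S" by simp
  then have "y \<in> insert a S" using partition_down_closed[OF p, of a y] assms(2-4) unfolding valid_node_def by auto
  then show ?thesis using assms(5) by simp
qed

lemma valid_node_iff: "valid_node x \<longleftrightarrow> 1 \<le> fst x \<and> 1 \<le> snd x" unfolding valid_node_def ..

lemma convex_region_skew: "is_partition lam \<Longrightarrow> is_partition mu \<Longrightarrow> convex_region (lam - mu)"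
  unfolding convex_region_def
proof (intro allI impI)
  fix x y z assume a: "is_partition lam" "is_partition mu" "x \<in> lam - mu" "z \<in> lam - mu"
    "fst x \<le> fst y" "fst y \<le> fst z" "snd x \<le> snd y" "snd y \<le> snd z"
  have v: "1 \<le> fst x \<and> 1 \<le> snd x" using partition_valid[OF a(1)] a(3) by blast
  have "y \<in> lam" using partition_down_closed[OF a(1), of z y] a v by auto
  moreover have "y \<notin> mu"
  proof
    assume "y \<in> mu"
    then have "x \<in> mu" using partition_down_closed[OF a(2), of y x] a v by auto
    then show False using a by auto
  qed
  ultimately show "y \<in> lam - mu" by blast
qed

lemma linked_pred_if_NW: "locally_linked E P \<Longrightarrow> x \<in> E \<Longrightarrow> NW x \<in> E \<Longrightarrow> \<exists>w. linked P w x"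
  unfolding locally_linked_def by blast

lemma linked_succ_if_NE: "locally_linked E P \<Longrightarrow> x \<in> E \<Longrightarrow> NE x \<in> E \<Longrightarrow> \<exists>y. linked P x y"
  unfolding locally_linked_def by blast

context
  fixes E P assumes tl: "dyck_tiling_on E P" and lc: "locally_linked E P" and cv: "convex_region E"
begin

text \<open>Both proofs walk along the two tiles simultaneously, towards the start (resp. the end):
  convexity of \<open>E\<close> guarantees the next node of the lower (resp. upper) tile exists, and the two
  predecessors (successors) are again in distinct tiles, adjacent columns and the same height order.\<close>

lemma start_col_le_of_lower_right:
  assumes "x \<in> E" "y \<in> E" "tile_of P x \<noteq> tile_of P y" "column y = column x + 1" "height y < height x"
  shows "start_col P y \<le> start_col P x"
  using assms
proof (induction "nat (column x - start_col P x)" arbitrary: x y rule: less_induct)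
  case less
  have "NW y \<in> E"
    by (rule convex_regionD[OF cv less.prems(2,1)]) (use less.prems(4,5) in \<open>auto simp: node_defs\<close>)
  then obtain y' where y': "linked P y' y" using linked_pred_if_NW[OF lc] less.prems(2) by blast
  note Y = linkedD[OF tl y']
  show ?case
  proof (cases "\<exists>w. linked P w x")
    case False
    then have "start_col P x = column x"
      using has_pred_iff[OF tl less.prems(1)] start_col_le[OF tl less.prems(1)] by simp
    moreover have "start_col P y' \<le> column y'" using start_col_le[OF tl] Y by blast
    ultimately show ?thesis using linked_start_col[OF tl y'] Y less.prems(4) by simp
  next
    case True
    then obtain x' where x': "linked P x' x" by blast
    note X = linkedD[OF tl x']
    have "y' \<noteq> x" using Y less.prems(3) by auto
    then have h: "height y' < height x'"
      using linked_pred_cases[OF tl y'] linked_pred_cases[OF tl x'] less.prems(4,5)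
      by (cases x, cases y) (auto simp: node_defs)
    have "start_col P x < column x" using has_pred_iff[OF tl less.prems(1)] True by blast
    then have "nat (column x' - start_col P x') < nat (column x - start_col P x)"
      using linked_start_col[OF tl x'] X by auto
    then have "start_col P y' \<le> start_col P x'"
      by (rule less.hyps) (use X Y less.prems h in auto)
    then show ?thesis using linked_start_col[OF tl x'] linked_start_col[OF tl y'] by simp
  qed
qed

lemma end_col_le_of_higher_right:
  assumes "x \<in> E" "y \<in> E" "tile_of P x \<noteq> tile_of P y" "column y = column x + 1" "height x < height y"
  shows "end_col P y \<le> end_col P x"
  using assms
proof (induction "nat (end_col P y - column y)" arbitrary: x y rule: less_induct)
  case less
  have "NE x \<in> E"
    by (rule convex_regionD[OF cv less.prems(1,2)]) (use less.prems(4,5) in \<open>auto simp: node_defs\<close>)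
  then obtain x' where x': "linked P x x'" using linked_succ_if_NE[OF lc] less.prems(1) by blast
  note X = linkedD[OF tl x']
  show ?case
  proof (cases "\<exists>w. linked P y w")
    case False
    then have "end_col P y = column y"
      using has_succ_iff[OF tl less.prems(2)] end_col_ge[OF tl less.prems(2)] by simp
    moreover have "column x' \<le> end_col P x'" using end_col_ge[OF tl] X by blast
    ultimately show ?thesis using linked_end_col[OF tl x'] X less.prems(4) by simp
  next
    case True
    then obtain y' where y': "linked P y y'" by blast
    note Y = linkedD[OF tl y']
    have "x' \<noteq> y" using X less.prems(3) by auto
    then have h: "height x' < height y'"
      using X Y less.prems(4,5) by (cases x, cases y) (auto simp: node_defs)
    have "column y < end_col P y" using has_succ_iff[OF tl less.prems(2)] True by blast
    then have "nat (end_col P y' - column y') < nat (end_col P y - column y)"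
      using linked_end_col[OF tl y'] Y by auto
    then have "end_col P y' \<le> end_col P x'"
      by (rule less.hyps) (use X Y less.prems h in auto)
    then show ?thesis using linked_end_col[OF tl x'] linked_end_col[OF tl y'] by simp
  qed
qed

lemma cover_expansive_if_locally_linked: "cover_expansive_on E P"
  unfolding cover_expansive_on_def
proof (intro conjI allI impI)
  fix a assume a: "a \<in> E \<and> SE a \<in> E"
  show "column (tile_start (tile_of P (SE a))) \<le> column (tile_start (tile_of P a))"
  proof (cases "tile_of P a = tile_of P (SE a)")
    case True then show ?thesis by simp
  next
    case False
    have "start_col P (SE a) \<le> start_col P a"
      by (rule start_col_le_of_lower_right) (use a False in \<open>auto simp: node_defs\<close>)
    then show ?thesis unfolding start_col_def .
  qed
next
  fix a assume a: "a \<in> E \<and> SW a \<in> E"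
  show "column (tile_end (tile_of P a)) \<le> column (tile_end (tile_of P (SW a)))"
  proof (cases "tile_of P (SW a) = tile_of P a")
    case True then show ?thesis by simp
  next
    case False
    have "end_col P a \<le> end_col P (SW a)"
      by (rule end_col_le_of_higher_right) (use a False in \<open>auto simp: node_defs\<close>)
    then show ?thesis unfolding end_col_def .
  qed
qed

end

lemma locally_linked_if_cover_expansive:
  assumes tl: "dyck_tiling_on E P" and c: "cover_expansive_on E P"
  shows "locally_linked E P"
  unfolding locally_linked_def
proof (intro conjI ballI impI)
  fix x assume x: "x \<in> E" "NW x \<in> E"
  have "SE (NW x) = x" by (cases x) (simp add: node_defs)
  then have "start_col P x \<le> start_col P (NW x)" using c x unfolding cover_expansive_on_def start_col_def by metis
  also have "\<dots> \<le> column (NW x)" using start_col_le[OF tl x(2)] .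
  also have "\<dots> < column x" by (cases x) (simp add: node_defs)
  finally show "\<exists>w. linked P w x" using has_pred_iff[OF tl x(1)] by blast
next
  fix x assume x: "x \<in> E" "NE x \<in> E"
  have "SW (NE x) = x" by (cases x) (simp add: node_defs)
  then have "end_col P (NE x) \<le> end_col P x" using c x unfolding cover_expansive_on_def end_col_def by metis
  moreover have "column (NE x) \<le> end_col P (NE x)" using end_col_ge[OF tl x(2)] .
  moreover have "column x < column (NE x)" by (cases x) (simp add: node_defs)
  ultimately show "\<exists>y. linked P x y" using has_succ_iff[OF tl x(1)] by simp
qed

lemma cover_expansive_iff_locally_linked: "dyck_tiling_on E P \<Longrightarrow> convex_region E \<Longrightarrow> cover_expansive_on E P \<longleftrightarrow> locally_linked E P"
  using locally_linked_if_cover_expansive cover_expansive_if_locally_linked by blast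

lemma column_pathI:
  assumes "finite T" "T \<noteq> {}" "\<And>x. x \<in> T \<Longrightarrow> valid_node x"
    "\<And>x y. x \<in> T \<Longrightarrow> y \<in> T \<Longrightarrow> column x = column y \<Longrightarrow> x = y"
    "\<And>x y c. x \<in> T \<Longrightarrow> y \<in> T \<Longrightarrow> column x \<le> c \<Longrightarrow> c \<le> column y \<Longrightarrow> \<exists>z\<in>T. column z = c"
    "\<And>x y. x \<in> T \<Longrightarrow> y \<in> T \<Longrightarrow> column y = column x + 1 \<Longrightarrow> y = NE x \<or> y = SE x"
  shows "column_path T"
  unfolding column_path_def using assms by blast

lemma column_path_replace:
  assumes p: "column_path T" and v: "v \<in> T" and cv: "column v' = column v" and vv: "valid_node v'"
    and L: "\<And>x. x \<in> T \<Longrightarrow> column x = column v - 1 \<Longrightarrow> v' = NE x \<or> v' = SE x"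
    and R: "\<And>y. y \<in> T \<Longrightarrow> column y = column v + 1 \<Longrightarrow> y = NE v' \<or> y = SE v'"
  shows "column_path (insert v' (T - {v}))"
proof (rule column_pathI)
  let ?T = "insert v' (T - {v})"
  show "finite ?T" using column_path_finite[OF p] by simp
  show "?T \<noteq> {}" by simp
  show "valid_node x" if "x \<in> ?T" for x using that vv column_path_valid[OF p, of x] by blast
  show "x = y" if "x \<in> ?T" "y \<in> ?T" "column x = column y" for x y
  proof (cases "x = v' \<or> y = v'")
    case True
    have X: "x = v' \<or> (x \<in> T \<and> x \<noteq> v)" "y = v' \<or> (y \<in> T \<and> y \<noteq> v)" using that(1,2) by blast+
    show ?thesis
    proof (rule ccontr)
      assume ne: "x \<noteq> y"
      then have "(x = v' \<and> y \<in> T \<and> y \<noteq> v) \<or> (y = v' \<and> x \<in> T \<and> x \<noteq> v)" using X True by blast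
      then show False using column_path_column_inj[OF p _ v] cv that(3) by metis
    qed
  next
    case False
    then have "x \<in> T" "y \<in> T" using that(1,2) by blast+
    then show ?thesis using column_path_column_inj[OF p] that(3) by blast
  qed
  show "\<exists>z\<in>?T. column z = c" if a: "x \<in> ?T" "y \<in> ?T" "column x \<le> c" "c \<le> column y" for x y c
  proof -
    define x1 where "x1 = (if x = v' then v else x)"
    define y1 where "y1 = (if y = v' then v else y)"
    have "x1 \<in> T" "y1 \<in> T" "column x1 = column x" "column y1 = column y"
      using a(1,2) v cv unfolding x1_def y1_def by auto
    then obtain z where "z \<in> T" "column z = c" using column_path_interval[OF p, of x1 y1 c] a by auto
    then show ?thesis using v cv by (cases "z = v") auto
  qed
  show "y = NE x \<or> y = SE x" if a: "x \<in> ?T" "y \<in> ?T" "column y = column x + 1" for x y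
  proof -
    consider "x = v'" | "y = v'" | "x \<in> T" "y \<in> T" "x \<noteq> v'" "y \<noteq> v'" using a by blast
    then show ?thesis
    proof cases
      case 1
      then have "y \<noteq> v'" using a by auto
      then have "y \<in> T" using a by blast
      then show ?thesis using R 1 a cv by auto
    next
      case 2
      then have "x \<noteq> v'" using a by auto
      then have "x \<in> T" using a by blast
      then show ?thesis using L 2 a cv by auto
    next
      case 3 then show ?thesis using column_path_adjacent[OF p] a by blast
    qed
  qed
qed

lemma tile_start_replace:
  assumes p: "column_path T" and v: "v \<in> T" "v \<noteq> tile_start T" and cv: "column v' = column v"
    and p2: "column_path (insert v' (T - {v}))"
  shows "tile_start (insert v' (T - {v})) = tile_start T"
proof (rule tile_start_eqI[OF p2])
  have s: "tile_start T \<in> T" "\<forall>y\<in>T. column (tile_start T) \<le> column y" using tile_start_least[OF p] by auto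
  show "tile_start T \<in> insert v' (T - {v})" using s v by auto
  show "\<forall>y\<in>insert v' (T - {v}). column (tile_start T) \<le> column y" using s v cv by auto
qed

lemma tile_end_replace:
  assumes p: "column_path T" and v: "v \<in> T" "v \<noteq> tile_end T" and cv: "column v' = column v"
    and p2: "column_path (insert v' (T - {v}))"
  shows "tile_end (insert v' (T - {v})) = tile_end T"
proof (rule tile_end_eqI[OF p2])
  have s: "tile_end T \<in> T" "\<forall>y\<in>T. column y \<le> column (tile_end T)" using tile_end_greatest[OF p] by auto
  show "tile_end T \<in> insert v' (T - {v})" using s v by auto
  show "\<forall>y\<in>insert v' (T - {v}). column y \<le> column (tile_end T)" using s v cv by auto
qed

lemma peak_eqI: "column_path T \<Longrightarrow> x \<in> T \<Longrightarrow> height x = h \<Longrightarrow> (\<And>y. y \<in> T \<Longrightarrow> height y \<le> h) \<Longrightarrow> peak T = h"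
  unfolding peak_def using column_path_finite
  by (metis (mono_tags, lifting) Max_eqI finite_imageI imageE imageI)

lemma dyck_replace:
  assumes d: "is_dyck_tile T" and v: "v \<in> T" "v \<noteq> tile_start T" "v \<noteq> tile_end T" and cv: "column v' = column v"
    and vv: "valid_node v'" and h: "height v' \<le> peak T"
    and L: "\<And>x. x \<in> T \<Longrightarrow> column x = column v - 1 \<Longrightarrow> v' = NE x \<or> v' = SE x"
    and R: "\<And>y. y \<in> T \<Longrightarrow> column y = column v + 1 \<Longrightarrow> y = NE v' \<or> y = SE v'"
  shows "is_dyck_tile (insert v' (T - {v})) \<and> peak (insert v' (T - {v})) = peak T"
proof -
  have p: "column_path T" using d unfolding is_dyck_tile_iff by blast
  have p2: "column_path (insert v' (T - {v}))" by (rule column_path_replace[OF p v(1) cv vv L R])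
  have s: "tile_start (insert v' (T - {v})) = tile_start T" by (rule tile_start_replace[OF p v(1,2) cv p2])
  have e: "tile_end (insert v' (T - {v})) = tile_end T" by (rule tile_end_replace[OF p v(1,3) cv p2])
  have sT: "tile_start T \<in> insert v' (T - {v})" using tile_start_least[OF p] v by auto
  have M: "peak (insert v' (T - {v})) = peak T"
    by (rule peak_eqI[OF p2 sT]) (use d h peak_ge[OF p] in \<open>auto simp: is_dyck_tile_iff\<close>)
  show ?thesis using d p2 s e M unfolding is_dyck_tile_iff by simp
qed

lemma column_path_subset:
  assumes p: "column_path T" and S: "S \<subseteq> T" "S \<noteq> {}"
    and cl: "\<And>x y z. x \<in> S \<Longrightarrow> y \<in> S \<Longrightarrow> z \<in> T \<Longrightarrow> column x \<le> column z \<Longrightarrow> column z \<le> column y \<Longrightarrow> z \<in> S"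
  shows "column_path S"
proof (rule column_pathI)
  show "finite S" using column_path_finite[OF p] S finite_subset by blast
  show "S \<noteq> {}" by fact
  show "valid_node x" if "x \<in> S" for x using that S column_path_valid[OF p] by blast
  show "x = y" if "x \<in> S" "y \<in> S" "column x = column y" for x y using that S column_path_column_inj[OF p] by blast
  show "\<exists>z\<in>S. column z = c" if a: "x \<in> S" "y \<in> S" "column x \<le> c" "c \<le> column y" for x y c
  proof -
    obtain z where "z \<in> T" "column z = c" using column_path_interval[OF p, of x y c] a S by blast
    then show ?thesis using cl[of x y z] a by blast
  qed
  show "y = NE x \<or> y = SE x" if "x \<in> S" "y \<in> S" "column y = column x + 1" for x y
    using that S column_path_adjacent[OF p] by blast
qed

lemma column_path_merge:
  assumes pL: "column_path TL" and pR: "column_path TR" and vc: "valid_node c"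
    and cL: "\<And>x. x \<in> TL \<Longrightarrow> column x < column c" and cR: "\<And>x. x \<in> TR \<Longrightarrow> column c < column x"
    and eL: "column (tile_end TL) = column c - 1" and sR: "column (tile_start TR) = column c + 1"
    and aL: "c = NE (tile_end TL) \<or> c = SE (tile_end TL)"
    and aR: "tile_start TR = NE c \<or> tile_start TR = SE c"
  shows "column_path (TL \<union> {c} \<union> TR)"
proof (rule column_pathI)
  let ?M = "TL \<union> {c} \<union> TR"
  have EL: "tile_end TL \<in> TL" "\<And>y. y \<in> TL \<Longrightarrow> column y \<le> column (tile_end TL)" using tile_end_greatest[OF pL] by auto
  have SL: "tile_start TL \<in> TL" "\<And>y. y \<in> TL \<Longrightarrow> column (tile_start TL) \<le> column y" using tile_start_least[OF pL] by auto
  have SR: "tile_start TR \<in> TR" "\<And>y. y \<in> TR \<Longrightarrow> column (tile_start TR) \<le> column y" using tile_start_least[OF pR] by auto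
  have ER: "tile_end TR \<in> TR" "\<And>y. y \<in> TR \<Longrightarrow> column y \<le> column (tile_end TR)" using tile_end_greatest[OF pR] by auto
  show "finite ?M" using column_path_finite[OF pL] column_path_finite[OF pR] by simp
  show "?M \<noteq> {}" by simp
  show "valid_node x" if "x \<in> ?M" for x using that vc column_path_valid[OF pL] column_path_valid[OF pR] by blast
  show "x = y" if "x \<in> ?M" "y \<in> ?M" "column x = column y" for x y
    using that column_path_column_inj[OF pL] column_path_column_inj[OF pR] cL cR by (metis Un_iff less_irrefl order.strict_trans singletonD)
  have colset: "\<exists>z\<in>?M. column z = c'" if a: "column (tile_start TL) \<le> c'" "c' \<le> column (tile_end TR)" for c'
  proof -
    consider "c' < column c" | "c' = column c" | "c' > column c" by linarith
    then show ?thesis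
    proof cases
      case 1
      then obtain z where "z \<in> TL" "column z = c'" using column_path_interval[OF pL SL(1) EL(1), of c'] a eL 1 by force
      then show ?thesis by blast
    next
      case 2 then show ?thesis by blast
    next
      case 3
      then obtain z where "z \<in> TR" "column z = c'" using column_path_interval[OF pR SR(1) ER(1), of c'] a sR 3 by force
      then show ?thesis by blast
    qed
  qed
  have b1: "column (tile_start TL) \<le> column (tile_end TL)" using SL(1) EL(2) by simp
  have b2: "column (tile_start TR) \<le> column (tile_end TR)" using SR(1) ER(2) by simp
  have bnd: "column (tile_start TL) \<le> column z \<and> column z \<le> column (tile_end TR)" if a: "z \<in> ?M" for z
  proof -
    consider "z \<in> TL" | "z = c" | "z \<in> TR" using a by blast
    then show ?thesis
    proof cases
      case 1 then show ?thesis using SL(2)[of z] EL(2)[of z] eL sR b2 by linarith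
    next
      case 2 then show ?thesis using b1 b2 eL sR by simp
    next
      case 3 then show ?thesis using SR(2)[of z] ER(2)[of z] eL sR b1 by linarith
    qed
  qed
  show "\<exists>z\<in>?M. column z = c'" if "x \<in> ?M" "y \<in> ?M" "column x \<le> c'" "c' \<le> column y" for x y c'
    using colset bnd[OF that(1)] bnd[OF that(2)] that(3,4) by auto
  show "y = NE x \<or> y = SE x" if a: "x \<in> ?M" "y \<in> ?M" "column y = column x + 1" for x y
  proof -
    consider "x \<in> TL" "y \<in> TL" | "x \<in> TL" "y = c" | "x = c" "y \<in> TR" | "x \<in> TR" "y \<in> TR"
      | "x \<in> TL" "y \<in> TR" | "x = c" "y \<in> TL" | "x \<in> TR" "y \<notin> TR" | "x = c" "y = c"
      using a by blast
    then show ?thesis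
    proof cases
      case 1 then show ?thesis using column_path_adjacent[OF pL] a(3) by blast
    next
      case 2
      then have "x = tile_end TL" using column_path_column_inj[OF pL] EL a eL by simp
      then show ?thesis using aL 2 by simp
    next
      case 3
      then have "y = tile_start TR" using column_path_column_inj[OF pR] SR a sR by simp
      then show ?thesis using aR 3 by simp
    next
      case 4 then show ?thesis using column_path_adjacent[OF pR] a by blast
    next
      case 5
      then have "column x \<le> column c - 1" "column c + 1 \<le> column y" using EL eL SR sR by auto
      then show ?thesis using a by simp
    next
      case 6 then show ?thesis using cL a by fastforce
    next
      case 7 then have "y \<in> TL \<or> y = c" using a by blast
      then show ?thesis using cL cR 7 a by fastforce
    next
      case 8 then show ?thesis using a by simp
    qed
  qed
qed

lemma tiling_dyck_tile: "dyck_tiling_on E P \<Longrightarrow> T \<in> P \<Longrightarrow> is_dyck_tile T"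
  unfolding dyck_tiling_on_def by blast

lemma dyck_tiling_onI: "(\<And>T. T \<in> P \<Longrightarrow> is_dyck_tile T) \<Longrightarrow> \<Union>P = E \<Longrightarrow> (\<And>T T'. T \<in> P \<Longrightarrow> T' \<in> P \<Longrightarrow> T \<noteq> T' \<Longrightarrow> T \<inter> T' = {})
  \<Longrightarrow> dyck_tiling_on E P"
  unfolding dyck_tiling_on_def by blast

lemma tiling_tiles_disjoint: "dyck_tiling_on E P \<Longrightarrow> T \<in> P \<Longrightarrow> T' \<in> P \<Longrightarrow> T \<noteq> T' \<Longrightarrow> T \<inter> T' = {}"
  unfolding dyck_tiling_on_def by blast

lemma linkedI: "S \<in> P \<Longrightarrow> u \<in> S \<Longrightarrow> v \<in> S \<Longrightarrow> column v = column u + 1 \<Longrightarrow> linked P u v"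
  unfolding linked_def by blast

lemma dyck_tiling_on_image:
  assumes tl: "dyck_tiling_on E P" and inj: "inj_on g E" and d: "\<And>T. T \<in> P \<Longrightarrow> is_dyck_tile (g ` T)"
  shows "dyck_tiling_on (g ` E) ((`) g ` P)"
  unfolding dyck_tiling_on_def
proof (intro conjI ballI impI)
  fix T assume "T \<in> (`) g ` P" then show "is_dyck_tile T" using d by blast
next
  show "\<Union> ((`) g ` P) = g ` E" using tiling_Union[OF tl] by blast
next
  fix T1 T2 assume a: "T1 \<in> (`) g ` P" "T2 \<in> (`) g ` P" "T1 \<noteq> T2"
  then obtain S1 S2 where s: "S1 \<in> P" "S2 \<in> P" "T1 = g ` S1" "T2 = g ` S2" by blast
  then have "S1 \<noteq> S2" using a by blast
  then have "S1 \<inter> S2 = {}" using tl s unfolding dyck_tiling_on_def by blast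
  moreover have "S1 \<subseteq> E" "S2 \<subseteq> E" using tiling_subset[OF tl] s by auto
  ultimately show "T1 \<inter> T2 = {}" using inj_on_image_Int[OF inj, of S1 S2] s by simp
qed

lemma linked_image:
  assumes cg: "\<And>x. column (g x) = column x"
  shows "linked ((`) g ` P) u v \<longleftrightarrow> (\<exists>x y. linked P x y \<and> u = g x \<and> v = g y)"
proof
  assume "linked ((`) g ` P) u v"
  then obtain T where "T \<in> P" "u \<in> g ` T" "v \<in> g ` T" "column v = column u + 1" unfolding linked_def by blast
  then obtain x y where xy: "x \<in> T" "y \<in> T" "u = g x" "v = g y" by blast
  then have "linked P x y" unfolding linked_def
    using \<open>T \<in> P\<close> \<open>column v = column u + 1\<close> cg by auto
  then show "\<exists>x y. linked P x y \<and> u = g x \<and> v = g y" using xy by blast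
next
  assume "\<exists>x y. linked P x y \<and> u = g x \<and> v = g y"
  then obtain x y where xy: "linked P x y" "u = g x" "v = g y" by blast
  from xy(1) obtain T where T: "T \<in> P" "x \<in> T" "y \<in> T" "column y = column x + 1"
    unfolding linked_def by blast
  have "g ` T \<in> (`) g ` P" using T(1) by (rule imageI)
  moreover have "u \<in> g ` T" "v \<in> g ` T" using T xy by auto
  moreover have "column v = column u + 1" using T(4) xy cg by simp
  ultimately show "linked ((`) g ` P) u v" unfolding linked_def by blast
qed

lemma locally_linked_image:
  assumes "\<And>x. column (g x) = column x"
    and "\<And>u. u \<in> E \<Longrightarrow> NW u \<in> E \<Longrightarrow> \<exists>x y. linked P x y \<and> u = g y"
    and "\<And>u. u \<in> E \<Longrightarrow> NE u \<in> E \<Longrightarrow> \<exists>x y. linked P x y \<and> u = g x"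
  shows "locally_linked E ((`) g ` P)"
  unfolding locally_linked_def linked_image[OF assms(1)] using assms(2,3) by blast

section \<open>Splitting and merging tiles\<close>

definition split_tile :: "node set set \<Rightarrow> node \<Rightarrow> node set set" where
  "split_tile P c = insert {x\<in>tile_of P c. column x < column c}
     (insert {x\<in>tile_of P c. column c < column x} (P - {tile_of P c}))"

definition merge_tiles :: "node set set \<Rightarrow> node \<Rightarrow> node \<Rightarrow> node \<Rightarrow> node set set" where
  "merge_tiles Q c a b = insert (tile_of Q a \<union> {c} \<union> tile_of Q b) (Q - {tile_of Q a, tile_of Q b})"

context
  fixes E P c assumes tl: "dyck_tiling_on E P" and cE: "c \<in> E"
    and dL: "is_dyck_tile {x\<in>tile_of P c. column x < column c}" and dR: "is_dyck_tile {x\<in>tile_of P c. column c < column x}"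
begin

lemma dyck_tiling_on_split: "dyck_tiling_on (E - {c}) (split_tile P c)"
proof -
  let ?T = "tile_of P c"
  let ?L = "{x\<in>?T. column x < column c}" and ?R = "{x\<in>?T. column c < column x}"
  have T: "?T \<in> P" "c \<in> ?T" using tile_of_mem[OF tl cE] by auto
  have pT: "column_path ?T" using tiling_column_path[OF tl T(1)] .
  have TLR: "?T - {c} = ?L \<union> ?R"
  proof
    show "?T - {c} \<subseteq> ?L \<union> ?R"
    proof
      fix x assume "x \<in> ?T - {c}"
      then have "column x \<noteq> column c" using column_path_column_inj[OF pT _ T(2)] by blast
      then show "x \<in> ?L \<union> ?R" using \<open>x \<in> ?T - {c}\<close> by auto
    qed
  qed auto
  have U: "\<Union>(P - {?T}) = E - ?T"
  proof
    show "\<Union>(P - {?T}) \<subseteq> E - ?T" using tiling_subset[OF tl] tiling_same_tile[OF tl T(1)] by blast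
    show "E - ?T \<subseteq> \<Union>(P - {?T})" using tiling_Union[OF tl] by blast
  qed
  show ?thesis unfolding split_tile_def
  proof (rule dyck_tiling_onI)
    fix S assume "S \<in> insert ?L (insert ?R (P - {?T}))"
    then consider "S = ?L" | "S = ?R" | "S \<in> P" by blast
    then show "is_dyck_tile S" using dL dR tiling_dyck_tile[OF tl] by cases auto
  next
    have "?T \<subseteq> E" using tiling_subset[OF tl T(1)] .
    have "\<Union> (insert ?L (insert ?R (P - {?T}))) = (?L \<union> ?R) \<union> \<Union>(P - {?T})" by (simp only: Union_insert Un_assoc)
    also have "\<dots> = (?T - {c}) \<union> (E - ?T)" by (simp only: TLR U)
    also have "\<dots> = E - {c}" using \<open>?T \<subseteq> E\<close> T(2) by blast
    finally show "\<Union> (insert ?L (insert ?R (P - {?T}))) = E - {c}" .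
  next
    fix S1 S2 assume a: "S1 \<in> insert ?L (insert ?R (P - {?T}))" "S2 \<in> insert ?L (insert ?R (P - {?T}))" "S1 \<noteq> S2"
    have dj: "S \<inter> ?T = {}" if "S \<in> P - {?T}" for S using tiling_tiles_disjoint[OF tl _ T(1)] that by blast
    have lr: "?L \<inter> ?R = {}" by auto
    have sub: "?L \<subseteq> ?T" "?R \<subseteq> ?T" by auto
    have h: "?L \<inter> S = {} \<and> ?R \<inter> S = {}" if "S \<in> P - {?T}" for S
      using dj[OF that] sub by blast
    consider "S1 = ?L" | "S1 = ?R" | "S1 \<in> P - {?T}" using a(1) by blast
    then show "S1 \<inter> S2 = {}"
    proof cases
      case 1
      consider "S2 = ?R" | "S2 \<in> P - {?T}" using a(2,3) 1 by blast
      then show ?thesis using 1 lr h by cases auto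
    next
      case 2
      consider "S2 = ?L" | "S2 \<in> P - {?T}" using a(2,3) 2 by blast
      then show ?thesis using 2 lr h by cases auto
    next
      case 3
      consider "S2 = ?L" | "S2 = ?R" | "S2 \<in> P - {?T}" using a(2) by blast
      then show ?thesis
      proof cases
        case 1 then show ?thesis using h[OF 3] by blast
      next
        case 2 then show ?thesis using h[OF 3] by blast
      next
        case c: 3 then show ?thesis using tiling_tiles_disjoint[OF tl, of S1 S2] 3 a(3) by blast
      qed
    qed
  qed
qed

lemma linked_split: "linked (split_tile P c) u v \<longleftrightarrow> linked P u v \<and> u \<noteq> c \<and> v \<noteq> c"
proof -
  let ?T = "tile_of P c"
  let ?L = "{x\<in>?T. column x < column c}" and ?R = "{x\<in>?T. column c < column x}"
  have T: "?T \<in> P" "c \<in> ?T" using tile_of_mem[OF tl cE] by auto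
  have pT: "column_path ?T" using tiling_column_path[OF tl T(1)] .
  show ?thesis
  proof
    assume "linked (split_tile P c) u v"
    then obtain S where S: "S \<in> insert ?L (insert ?R (P - {?T}))" "u \<in> S" "v \<in> S" "column v = column u + 1"
      unfolding linked_def split_tile_def by blast
    consider "S = ?L" | "S = ?R" | "S \<in> P" "S \<noteq> ?T" using S(1) by blast
    then show "linked P u v \<and> u \<noteq> c \<and> v \<noteq> c"
    proof cases
      case 1
      then have "u \<in> ?T" "v \<in> ?T" "column u < column c" "column v < column c" using S(2,3) by auto
      then show ?thesis using S(4) T(1) unfolding linked_def by auto
    next
      case 2
      then have "u \<in> ?T" "v \<in> ?T" "column c < column v" "column c < column u" using S(2,3) by auto
      then show ?thesis using S(4) T(1) unfolding linked_def by auto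
    next
      case 3
      have "c \<notin> S"
      proof
        assume "c \<in> S"
        from tiling_same_tile[OF tl 3(1) T(1) this T(2)] 3(2) show False by simp
      qed
      then have "u \<noteq> c" "v \<noteq> c" using S(2,3) by blast+
      moreover have "linked P u v" unfolding linked_def using S(2,3,4) 3(1) by blast
      ultimately show ?thesis by blast
    qed
  next
    assume a: "linked P u v \<and> u \<noteq> c \<and> v \<noteq> c"
    then obtain S where S: "S \<in> P" "u \<in> S" "v \<in> S" "column v = column u + 1" unfolding linked_def by blast
    show "linked (split_tile P c) u v"
    proof (cases "S = ?T")
      case True
      have "column v \<noteq> column c" using column_path_column_inj[OF pT _ T(2), of v] S True a by blast
      moreover have "column u \<noteq> column c" using column_path_column_inj[OF pT _ T(2), of u] S True a by blast
      moreover have uv: "u \<in> ?T" "v \<in> ?T" using S(2,3) True by auto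
      ultimately have "(u \<in> ?L \<and> v \<in> ?L) \<or> (u \<in> ?R \<and> v \<in> ?R)"
        using S(4) by (cases "column u < column c") auto
      moreover have "?L \<in> split_tile P c" unfolding split_tile_def by (rule insertI1)
      moreover have "?R \<in> split_tile P c" unfolding split_tile_def by (rule insertI2, rule insertI1)
      ultimately show ?thesis using linkedI[of _ "split_tile P c" u v] S(4) by blast
    next
      case False
      then have SP: "S \<in> P - {?T}" using S(1) by blast
      have "S \<in> split_tile P c" unfolding split_tile_def by (rule insertI2, rule insertI2, rule SP)
      then show ?thesis using linkedI S(2,3,4) by blast
    qed
  qed
qed

end

context
  fixes E Q c a b assumes tl: "dyck_tiling_on E Q" and cE: "c \<notin> E" and aE: "a \<in> E" and bE: "b \<in> E"
    and ne: "tile_of Q a \<noteq> tile_of Q b"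
    and dM: "is_dyck_tile (tile_of Q a \<union> {c} \<union> tile_of Q b)"
begin

lemma dyck_tiling_on_merge: "dyck_tiling_on (insert c E) (merge_tiles Q c a b)"
proof -
  let ?A = "tile_of Q a" and ?B = "tile_of Q b"
  have A: "?A \<in> Q" "a \<in> ?A" using tile_of_mem[OF tl aE] by auto
  have B: "?B \<in> Q" "b \<in> ?B" using tile_of_mem[OF tl bE] by auto
  show ?thesis unfolding merge_tiles_def
  proof (rule dyck_tiling_onI)
    fix S assume "S \<in> insert (?A \<union> {c} \<union> ?B) (Q - {?A, ?B})"
    then consider "S = ?A \<union> {c} \<union> ?B" | "S \<in> Q" by blast
    then show "is_dyck_tile S" using dM tiling_dyck_tile[OF tl] by cases auto
  next
    show "\<Union> (insert (?A \<union> {c} \<union> ?B) (Q - {?A, ?B})) = insert c E"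
      using tiling_Union[OF tl] A B by blast
  next
    fix S1 S2 assume a: "S1 \<in> insert (?A \<union> {c} \<union> ?B) (Q - {?A, ?B})" "S2 \<in> insert (?A \<union> {c} \<union> ?B) (Q - {?A, ?B})" "S1 \<noteq> S2"
    have dj: "S \<inter> (?A \<union> {c} \<union> ?B) = {}" if "S \<in> Q - {?A, ?B}" for S
    proof -
      have "S \<inter> ?A = {}" "S \<inter> ?B = {}" using tiling_tiles_disjoint[OF tl] that A B by blast+
      moreover have "c \<notin> S" using that tiling_subset[OF tl] cE by blast
      ultimately show ?thesis by blast
    qed
    show "S1 \<inter> S2 = {}" using a dj tiling_tiles_disjoint[OF tl] by blast
  qed
qed

lemma linked_merge:
  assumes cA: "\<And>x. x \<in> tile_of Q a \<Longrightarrow> column x < column c" and cB: "\<And>x. x \<in> tile_of Q b \<Longrightarrow> column c < column x"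
    and ca: "column a = column c - 1" and cb: "column b = column c + 1"
  shows "linked (merge_tiles Q c a b) u v \<longleftrightarrow> linked Q u v \<or> (u = a \<and> v = c) \<or> (u = c \<and> v = b)"
proof -
  let ?A = "tile_of Q a" and ?B = "tile_of Q b"
  have A: "?A \<in> Q" "a \<in> ?A" using tile_of_mem[OF tl aE] by auto
  have B: "?B \<in> Q" "b \<in> ?B" using tile_of_mem[OF tl bE] by auto
  have pA: "column_path ?A" using tiling_column_path[OF tl A(1)] .
  have pB: "column_path ?B" using tiling_column_path[OF tl B(1)] .
  show ?thesis
  proof
    assume "linked (merge_tiles Q c a b) u v"
    then obtain S where S: "S \<in> insert (?A \<union> {c} \<union> ?B) (Q - {?A, ?B})" "u \<in> S" "v \<in> S" "column v = column u + 1"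
      unfolding linked_def merge_tiles_def by blast
    show "linked Q u v \<or> (u = a \<and> v = c) \<or> (u = c \<and> v = b)"
    proof (cases "S = ?A \<union> {c} \<union> ?B")
      case False
      then show ?thesis using S unfolding linked_def by blast
    next
      case True
      consider "u \<in> ?A" "v \<in> ?A" | "u \<in> ?B" "v \<in> ?B" | "u \<in> ?A" "v = c" | "u = c" "v \<in> ?B"
        | "u \<in> ?A" "v \<in> ?B" | "u = c" "v \<in> ?A" | "u \<in> ?B" "v \<in> ?A" | "u \<in> ?B" "v = c" | "u = c" "v = c"
        using S True by blast
      then show ?thesis
      proof cases
        case 1 then show ?thesis using A S unfolding linked_def by blast
      next
        case 2 then show ?thesis using B S unfolding linked_def by blast
      next
        case 3
        then have "u = a" using column_path_column_inj[OF pA _ A(2), of u] S(4) ca by simp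
        then show ?thesis using 3 by blast
      next
        case 4
        then have "v = b" using column_path_column_inj[OF pB _ B(2), of v] S(4) cb by simp
        then show ?thesis using 4 by blast
      next
        case 5 then show ?thesis using cA[of u] cB[of v] S(4) by simp
      next
        case 6 then show ?thesis using cA[of v] S(4) by simp
      next
        case 7 then show ?thesis using cA[of v] cB[of u] S(4) by simp
      next
        case 8 then show ?thesis using cB[of u] S(4) by simp
      next
        case 9 then show ?thesis using S(4) by simp
      qed
    qed
  next
    assume h: "linked Q u v \<or> (u = a \<and> v = c) \<or> (u = c \<and> v = b)"
    show "linked (merge_tiles Q c a b) u v"
    proof (cases "linked Q u v")
      case True
      then obtain S where S: "S \<in> Q" "u \<in> S" "v \<in> S" "column v = column u + 1" unfolding linked_def by blast
      have MM: "?A \<union> {c} \<union> ?B \<in> merge_tiles Q c a b" unfolding merge_tiles_def by (rule insertI1)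
      show ?thesis
      proof (cases "S = ?A \<or> S = ?B")
        case True
        then have "u \<in> ?A \<union> {c} \<union> ?B" "v \<in> ?A \<union> {c} \<union> ?B" using S(2,3) by blast+
        then show ?thesis using linkedI[OF MM] S(4) by blast
      next
        case False
        then have SP: "S \<in> Q - {?A, ?B}" using S(1) by blast
        have "S \<in> merge_tiles Q c a b" unfolding merge_tiles_def by (rule insertI2, rule SP)
        then show ?thesis using linkedI S(2,3,4) by blast
      qed
    next
      case False
      have MM: "?A \<union> {c} \<union> ?B \<in> merge_tiles Q c a b" unfolding merge_tiles_def by (rule insertI1)
      have "(u = a \<and> v = c) \<or> (u = c \<and> v = b)" using h False by blast
      then show ?thesis
      proof
        assume "u = a \<and> v = c"
        then show ?thesis using linkedI[OF MM, of u v] A(2) ca by simp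
      next
        assume "u = c \<and> v = b"
        then show ?thesis using linkedI[OF MM, of u v] B(2) cb by simp
      qed
    qed
  qed
qed

end

lemma merge_split:
  assumes tl: "dyck_tiling_on E P" and cE: "c \<in> E"
    and dL: "is_dyck_tile {x\<in>tile_of P c. column x < column c}" and dR: "is_dyck_tile {x\<in>tile_of P c. column c < column x}"
    and a: "a \<in> {x\<in>tile_of P c. column x < column c}" and b: "b \<in> {x\<in>tile_of P c. column c < column x}"
  shows "merge_tiles (split_tile P c) c a b = P"
proof -
  let ?T = "tile_of P c"
  let ?L = "{x\<in>?T. column x < column c}" and ?R = "{x\<in>?T. column c < column x}"
  have T: "?T \<in> P" "c \<in> ?T" using tile_of_mem[OF tl cE] by auto
  have pT: "column_path ?T" using tiling_column_path[OF tl T(1)] .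
  have tl2: "dyck_tiling_on (E - {c}) (split_tile P c)" by (rule dyck_tiling_on_split[OF tl cE dL dR])
  have Lin: "?L \<in> split_tile P c" unfolding split_tile_def by (rule insertI1)
  have Rin: "?R \<in> split_tile P c" unfolding split_tile_def by (rule insertI2, rule insertI1)
  have ta: "tile_of (split_tile P c) a = ?L" by (rule tile_of_eqI[OF tl2 Lin a])
  have tb: "tile_of (split_tile P c) b = ?R" by (rule tile_of_eqI[OF tl2 Rin b])
  have TLR: "?L \<union> {c} \<union> ?R = ?T"
  proof
    show "?T \<subseteq> ?L \<union> {c} \<union> ?R"
    proof
      fix x assume x: "x \<in> ?T"
      show "x \<in> ?L \<union> {c} \<union> ?R"
      proof (cases "column x = column c")
        case True then have "x = c" using column_path_column_inj[OF pT x T(2)] by simp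
        then show ?thesis by blast
      next
        case False then show ?thesis using x by auto
      qed
    qed
    show "?L \<union> {c} \<union> ?R \<subseteq> ?T" using T(2) by blast
  qed
  have nL: "?L \<notin> P - {?T}"
  proof
    assume "?L \<in> P - {?T}"
    then have "?L \<inter> ?T = {}" using tiling_tiles_disjoint[OF tl _ T(1)] by blast
    then show False using a by blast
  qed
  have nR: "?R \<notin> P - {?T}"
  proof
    assume "?R \<in> P - {?T}"
    then have "?R \<inter> ?T = {}" using tiling_tiles_disjoint[OF tl _ T(1)] by blast
    then show False using b by blast
  qed
  have "split_tile P c - {?L, ?R} = P - {?T}"
  proof -
    have "split_tile P c - {?L, ?R} = (P - {?T}) - {?L, ?R}" unfolding split_tile_def by blast
    also have "\<dots> = P - {?T}" using nL nR by blast
    finally show ?thesis .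
  qed
  then have "merge_tiles (split_tile P c) c a b = insert ?T (P - {?T})" unfolding merge_tiles_def ta tb TLR by simp
  also have "\<dots> = P" using T(1) by blast
  finally show ?thesis .
qed

lemma split_merge:
  assumes tl: "dyck_tiling_on E Q" and cE: "c \<notin> E" and aE: "a \<in> E" and bE: "b \<in> E"
    and ne: "tile_of Q a \<noteq> tile_of Q b"
    and dM: "is_dyck_tile (tile_of Q a \<union> {c} \<union> tile_of Q b)"
    and cA: "\<And>x. x \<in> tile_of Q a \<Longrightarrow> column x < column c" and cB: "\<And>x. x \<in> tile_of Q b \<Longrightarrow> column c < column x"
  shows "split_tile (merge_tiles Q c a b) c = Q"
proof -
  let ?A = "tile_of Q a" and ?B = "tile_of Q b"
  let ?M = "?A \<union> {c} \<union> ?B"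
  have A: "?A \<in> Q" "a \<in> ?A" using tile_of_mem[OF tl aE] by auto
  have B: "?B \<in> Q" "b \<in> ?B" using tile_of_mem[OF tl bE] by auto
  have tl2: "dyck_tiling_on (insert c E) (merge_tiles Q c a b)" by (rule dyck_tiling_on_merge[OF tl cE aE bE ne dM])
  have Min: "?M \<in> merge_tiles Q c a b" unfolding merge_tiles_def by (rule insertI1)
  have tc: "tile_of (merge_tiles Q c a b) c = ?M" by (rule tile_of_eqI[OF tl2 Min]) blast
  have l: "{x\<in>?M. column x < column c} = ?A"
  proof
    show "{x\<in>?M. column x < column c} \<subseteq> ?A" using cB by fastforce
    show "?A \<subseteq> {x\<in>?M. column x < column c}" using cA by blast
  qed
  have r: "{x\<in>?M. column c < column x} = ?B"
  proof
    show "{x\<in>?M. column c < column x} \<subseteq> ?B" using cA by fastforce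
    show "?B \<subseteq> {x\<in>?M. column c < column x}" using cB by blast
  qed
  have nM: "?M \<notin> Q - {?A, ?B}"
  proof
    assume "?M \<in> Q - {?A, ?B}"
    then have "c \<in> E" using tiling_subset[OF tl] by blast
    then show False using cE by simp
  qed
  have "merge_tiles Q c a b - {?M} = Q - {?A, ?B}" unfolding merge_tiles_def using nM by blast
  then have "split_tile (merge_tiles Q c a b) c = insert ?A (insert ?B (Q - {?A, ?B}))"
    unfolding split_tile_def tc l r by simp
  also have "\<dots> = Q" using A(1) B(1) by blast
  finally show ?thesis .
qed

lemma dyck_tile_merge:
  assumes dL: "is_dyck_tile TL" and dR: "is_dyck_tile TR" and vc: "valid_node c"
    and eL: "tile_end TL = NW c" and sR: "tile_start TR = NE c"
  shows "is_dyck_tile (TL \<union> {c} \<union> TR) \<and> peak (TL \<union> {c} \<union> TR) = height c + 1"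
proof -
  let ?M = "TL \<union> {c} \<union> TR"
  have pL: "column_path TL" and pR: "column_path TR" using dL dR unfolding is_dyck_tile_iff by auto
  have SL: "tile_start TL \<in> TL" "\<And>y. y \<in> TL \<Longrightarrow> column (tile_start TL) \<le> column y"
    and EL: "\<And>y. y \<in> TL \<Longrightarrow> column y \<le> column (tile_end TL)" using tile_start_least[OF pL] tile_end_greatest[OF pL] by auto
  have ER: "tile_end TR \<in> TR" "\<And>y. y \<in> TR \<Longrightarrow> column y \<le> column (tile_end TR)"
    and SR: "\<And>y. y \<in> TR \<Longrightarrow> column (tile_start TR) \<le> column y" using tile_start_least[OF pR] tile_end_greatest[OF pR] by auto
  have cL: "\<And>x. x \<in> TL \<Longrightarrow> column x < column c" using EL eL by fastforce
  have cR: "\<And>x. x \<in> TR \<Longrightarrow> column c < column x" using SR sR by fastforce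
  have pM: "column_path ?M" by (rule column_path_merge[OF pL pR vc cL cR]) (use eL sR SE_NW in simp_all)
  have sM: "tile_start ?M = tile_start TL"
    by (rule tile_start_eqI[OF pM]) (use SL cL cR in \<open>fastforce+\<close>)
  have eM: "tile_end ?M = tile_end TR"
    by (rule tile_end_eqI[OF pM]) (use ER cL cR in \<open>fastforce+\<close>)
  have pkL: "peak TL = height c + 1" and pkR: "peak TR = height c + 1"
    using dL dR eL sR unfolding is_dyck_tile_iff by auto
  then have hL: "height (tile_start TL) = height c + 1" and hR: "height (tile_end TR) = height c + 1"
    using dL dR unfolding is_dyck_tile_iff by auto
  have "peak ?M = height c + 1"
  proof (rule peak_eqI[OF pM _ hL])
    show "tile_start TL \<in> ?M" using SL by blast
    fix y assume "y \<in> ?M"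
    then show "height y \<le> height c + 1" using peak_ge[OF pL, of y] peak_ge[OF pR, of y] pkL pkR by auto
  qed
  then show ?thesis unfolding is_dyck_tile_iff using pM sM eM hL hR by simp
qed

section \<open>Moving nodes up and down a column\<close>

definition up :: "node \<Rightarrow> node" where "up x = (fst x + 1, snd x + 1)"

definition down :: "node \<Rightarrow> node" where "down x = (fst x - 1, snd x - 1)"

lemma up_SW: "up (SW x) = NW x" by (simp add: up_def node_defs)

lemma SW_up: "SW (up x) = NW x" by (simp add: up_def node_defs)

lemma NW_up: "NW (up x) = up (NW x)" by (simp add: up_def node_defs)

lemma NE_NW: "NE (NW x) = up x" by (simp add: up_def node_defs)

lemma NW_NE: "NW (NE x) = up x" by (simp add: node_defs up_def)

lemma SW_SE: "SW (SE x) = down x" by (simp add: node_defs down_def)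

lemma SE_SW: "SE (SW x) = down x" by (simp add: node_defs down_def)

lemma SE_up: "SE (up x) = NE x" by (simp add: node_defs up_def)

lemma NE_down: "NE (down x) = SE x" by (simp add: node_defs down_def)

lemma column_up[simp]: "column (up x) = column x" by (simp add: up_def node_defs)

lemma column_down[simp]: "column (down x) = column x" by (simp add: down_def node_defs)

lemma height_up[simp]: "height (up x) = height x + 2" by (simp add: up_def node_defs)

lemma height_down[simp]: "height (down x) = height x - 2" by (simp add: down_def node_defs)

context
  fixes E P assumes tl: "dyck_tiling_on E P" and lc: "locally_linked E P" and cv: "convex_region E"
begin

text \<open>By induction towards the start of \<open>T\<close>: the predecessor \<open>w\<close> of \<open>x\<close> again has \<open>up w \<in> T'\<close>,
  since \<open>T'\<close> cannot start at \<open>up x\<close>, which lies below its peak.\<close>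

lemma up_not_in_higher_tile:
  assumes T: "T \<in> P" and T': "T' \<in> P" "T \<noteq> T'" and H: "peak T \<le> H" "H + 2 \<le> peak T'"
    and x: "x \<in> T"
  shows "up x \<notin> T'"
  using x
proof (induction "nat (column x - column (tile_start T))" arbitrary: x rule: less_induct)
  case less
  show ?case
  proof
    assume "up x \<in> T'"
    note prems = less.prems this
    have pT: "column_path T" using tiling_column_path[OF tl T] .
    have pT': "column_path T'" using tiling_column_path[OF tl T'(1)] .
    have xE: "x \<in> E" using tiling_subset[OF tl T] prems(1) by blast
    have uE: "up x \<in> E" using tiling_subset[OF tl T'(1)] prems(2) by blast
    have NWE: "NW x \<in> E" by (rule convex_regionD[OF cv xE uE]) (auto simp: up_def NW_def)
    obtain w where w: "linked P w x" using linked_pred_if_NW[OF lc xE NWE] by blast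
    have wT: "w \<in> T" using linked_pred_in_tile[OF tl w T prems(1)] .
    have cw: "column w = column x - 1" using linkedD[OF tl w] by simp
    have cs: "column (tile_start T) \<le> column w" using tile_start_least[OF pT] wT by blast
    have m: "nat (column w - column (tile_start T)) < nat (column x - column (tile_start T))" using cw cs by simp
    have "w = SW x \<or> w = NW x" by (rule linked_pred_cases[OF tl w])
    then show False
    proof
      assume wS: "w = SW x"
      have "NE (NW x) \<in> E" using uE NE_NW by simp
      then obtain y where y: "linked P (NW x) y" using linked_succ_if_NE[OF lc NWE] by blast
      have "y = NE (NW x) \<or> y = SE (NW x)" using linkedD[OF tl y] by blast
      moreover have "y \<noteq> x"
      proof
        assume "y = x"
        then have "NW x = w" using linked_pred_unique[OF tl y[unfolded \<open>y = x\<close>] w] by simp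
        then show False using wS SW_ne_NW by metis
      qed
      ultimately have "y = up x" using NE_NW SE_NW by metis
      then have "NW x \<in> T'" using linked_pred_in_tile[OF tl y T'(1)] prems(2) by simp
      then have "up w \<in> T'" using wS up_SW by simp
      then show False using less.hyps[OF m wT] by blast
    next
      assume wU: "w = NW x"
      have hw: "height w \<le> H" using peak_ge[OF pT wT] H(1) by simp
      have "column (tile_start T') < column (up x)"
      proof (rule ccontr)
        assume "\<not> column (tile_start T') < column (up x)"
        moreover have "column (tile_start T') \<le> column (up x)" using tile_start_least[OF pT'] prems(2) by blast
        ultimately have "column (tile_start T') = column (up x)" by simp
        then have "tile_start T' = up x" using column_path_column_inj[OF pT'] tile_start_least[OF pT'] prems(2) by blast
        then have "height (up x) = peak T'" using tiling_peak_ends[OF tl T'(1)] by simp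
        then show False using hw wU H(2) by simp
      qed
      then obtain w' where w': "w' \<in> T'" "linked P w' (up x)" using pred_exists[OF tl T'(1) prems(2)] by blast
      have "w' = SW (up x) \<or> w' = NW (up x)" by (rule linked_pred_cases[OF tl w'(2)])
      moreover have "w' \<noteq> SW (up x)"
      proof
        assume "w' = SW (up x)"
        then have "w \<in> T'" using w'(1) wU SW_up by simp
        then have "T = T'" using tiling_same_tile[OF tl T T'(1) wT] by simp
        then show False using T'(2) by simp
      qed
      ultimately have "up w \<in> T'" using w'(1) wU NW_up by simp
      then show False using less.hyps[OF m wT] by blast
    qed
  qed
qed

end

lemma image_replace_one:
  assumes "v \<in> T" "\<And>x. x \<in> T \<Longrightarrow> x \<noteq> v \<Longrightarrow> g x = x"
  shows "g ` T = insert (g v) (T - {v})"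
proof
  show "g ` T \<subseteq> insert (g v) (T - {v})"
  proof
    fix y assume "y \<in> g ` T"
    then obtain x where x: "x \<in> T" "y = g x" by blast
    show "y \<in> insert (g v) (T - {v})"
    proof (cases "x = v")
      case True then show ?thesis using x by simp
    next
      case False then have "g x = x" by (rule assms(2)[OF x(1)])
      then show ?thesis using x False by simp
    qed
  qed
  show "insert (g v) (T - {v}) \<subseteq> g ` T"
  proof
    fix y assume "y \<in> insert (g v) (T - {v})"
    then consider "y = g v" | "y \<in> T" "y \<noteq> v" by blast
    then show "y \<in> g ` T"
    proof cases
      case 1 then show ?thesis using assms(1) by blast
    next
      case 2
      have gy: "g y = y" by (rule assms(2)[OF 2(1) 2(2)])
      show ?thesis by (rule image_eqI[of y g y]) (use gy 2 in simp_all)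
    qed
  qed
qed

lemma tile_of_image:
  assumes tl: "dyck_tiling_on E P" and inj: "inj_on g E" and T: "T \<in> P" and x: "x \<in> T"
    and d: "\<And>T. T \<in> P \<Longrightarrow> is_dyck_tile (g ` T)"
  shows "tile_of ((`) g ` P) (g x) = g ` T"
proof -
  have tl2: "dyck_tiling_on (g ` E) ((`) g ` P)" by (rule dyck_tiling_on_image[OF tl inj d])
  show ?thesis by (rule tile_of_eqI[OF tl2]) (use T x in auto)
qed

lemma image_image_inverse:
  assumes "\<And>x. x \<in> \<Union>P \<Longrightarrow> g (f x) = x"
  shows "(`) g ` ((`) f ` P) = P"
proof -
  have "(`) g ` ((`) f ` P) = (\<lambda>T. g ` f ` T) ` P" by (simp add: image_comp)
  also have "\<dots> = (\<lambda>T. T) ` P"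
  proof (rule image_cong[OF refl])
    fix T assume "T \<in> P"
    then have "\<And>x. x \<in> T \<Longrightarrow> g (f x) = x" using assms by blast
    then show "g ` f ` T = T" by (simp add: image_image)
  qed
  finally show ?thesis by simp
qed

lemma dyck_tile_raise_valley:
  assumes d: "is_dyck_tile T" and v: "v \<in> T" "NW v \<in> T" "NE v \<in> T"
    and vv: "valid_node (up v)" and h: "height v + 2 \<le> peak T"
  shows "is_dyck_tile (insert (up v) (T - {v})) \<and> peak (insert (up v) (T - {v})) = peak T"
proof -
  have p: "column_path T" using d unfolding is_dyck_tile_iff by blast
  have "v \<noteq> tile_start T" using tile_start_least[OF p] v(2) by fastforce
  moreover have "v \<noteq> tile_end T" using tile_end_greatest[OF p] v(3) by fastforce
  ultimately show ?thesis
  proof (rule dyck_replace[OF d v(1)])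
    fix x assume "x \<in> T" "column x = column v - 1"
    then have "x = NW v" using column_path_column_inj[OF p _ v(2)] by simp
    then show "up v = NE x \<or> up v = SE x" using NE_NW by simp
  next
    fix y assume "y \<in> T" "column y = column v + 1"
    then have "y = NE v" using column_path_column_inj[OF p _ v(3)] by simp
    then show "y = NE (up v) \<or> y = SE (up v)" using SE_up by simp
  qed (use vv h in simp_all)
qed

lemma dyck_tile_lower_peak:
  assumes d: "is_dyck_tile T" and v: "v \<in> T" "SW v \<in> T" "SE v \<in> T" and vv: "valid_node (down v)"
  shows "is_dyck_tile (insert (down v) (T - {v})) \<and> peak (insert (down v) (T - {v})) = peak T"
proof -
  have p: "column_path T" using d unfolding is_dyck_tile_iff by blast
  have "v \<noteq> tile_start T" using tile_start_least[OF p] v(2) by fastforce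
  moreover have "v \<noteq> tile_end T" using tile_end_greatest[OF p] v(3) by fastforce
  ultimately show ?thesis
  proof (rule dyck_replace[OF d v(1)])
    fix x assume "x \<in> T" "column x = column v - 1"
    then have "x = SW v" using column_path_column_inj[OF p _ v(2)] by simp
    then show "down v = NE x \<or> down v = SE x" using SE_SW by simp
  next
    fix y assume "y \<in> T" "column y = column v + 1"
    then have "y = SE v" using column_path_column_inj[OF p _ v(3)] by simp
    then show "y = NE (down v) \<or> y = SE (down v)" using NE_down by simp
  next
    show "height (down v) \<le> peak T" using peak_ge[OF p v(1)] by simp
  qed (use vv in simp_all)
qed

section \<open>Two addable nodes in one column\<close>

text \<open>\<open>diag t\<close> is the \<open>t\<close>-th node above \<open>m\<close> in its column, so \<open>diag (Suc n)\<close> is the addable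
  node of \<open>lam\<close>; \<open>skew\<close>, \<open>skew_m\<close> and \<open>skew_lm\<close> are \<open>\<lambda> - \<mu>\<close>, \<open>\<lambda> - \<mu>\<^sup>+\<close> and \<open>\<lambda>\<^sup>+ - \<mu>\<^sup>+\<close>.\<close>

locale diagonal_pair =
  fixes lam mu :: "node set" and m :: node and n :: nat
  assumes plam: "is_partition lam" and pmu: "is_partition mu" and sub: "mu \<subseteq> lam"
    and am: "addable mu m" and al: "addable lam (fst m + int (Suc n), snd m + int (Suc n))"
begin

definition diag :: "nat \<Rightarrow> node" where "diag t = (fst m + int t, snd m + int t)"

definition skew where "skew = lam - mu"

definition skew_m where "skew_m = lam - insert m mu"

definition skew_lm where "skew_lm = insert (diag (Suc n)) lam - insert m mu"

lemma diag_0: "diag 0 = m" by (simp add: diag_def)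

lemma diag_eq_iff: "diag s = diag t \<longleftrightarrow> s = t" by (simp add: diag_def)

lemma up_diag: "up (diag t) = diag (Suc t)" by (simp add: diag_def up_def)

lemma down_diag: "down (diag (Suc t)) = diag t" by (simp add: diag_def down_def)

lemma column_diag[simp]: "column (diag t) = column m" by (simp add: diag_def node_defs)

lemma height_diag: "height (diag t) = height m + 2 * int t" by (simp add: diag_def node_defs)

lemma SW_diag_Suc: "SW (diag (Suc t)) = NW (diag t)" by (simp add: diag_def node_defs)

lemma SE_diag_Suc: "SE (diag (Suc t)) = NE (diag t)" by (simp add: diag_def node_defs)

lemma m_valid: "valid_node m" using am unfolding addable_def by blast

lemma m_notin_mu: "m \<notin> mu" using am unfolding addable_def by blast

lemma top_notin_lam: "diag (Suc n) \<notin> lam" using al unfolding addable_def diag_def by blast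

lemma top_notin_mu: "diag (Suc n) \<notin> mu" using top_notin_lam sub by blast

lemma mu_down: "x \<in> mu \<Longrightarrow> valid_node y \<Longrightarrow> fst y \<le> fst x \<Longrightarrow> snd y \<le> snd x \<Longrightarrow> y \<in> mu"
  using partition_down_closed[OF pmu, of x y] unfolding valid_node_def by blast

lemma lam_valid: "x \<in> lam \<Longrightarrow> valid_node x" using partition_valid[OF plam] unfolding valid_node_def by blast

lemma in_lam_below_top: "valid_node y \<Longrightarrow> fst y \<le> fst m + int (Suc n) \<Longrightarrow> snd y \<le> snd m + int (Suc n)
   \<Longrightarrow> y \<noteq> diag (Suc n) \<Longrightarrow> y \<in> lam"
  using addable_below[OF al, of y] unfolding diag_def by auto

lemma notin_mu_above_m: "fst m \<le> fst y \<Longrightarrow> snd m \<le> snd y \<Longrightarrow> y \<notin> mu"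
proof
  assume a: "fst m \<le> fst y" "snd m \<le> snd y" "y \<in> mu"
  have "m \<in> mu" by (rule mu_down[OF a(3) m_valid a(1) a(2)])
  then show False using m_notin_mu by simp
qed

lemma in_skew_between: "fst m \<le> fst y \<Longrightarrow> snd m \<le> snd y \<Longrightarrow> fst y \<le> fst m + int (Suc n) \<Longrightarrow> snd y \<le> snd m + int (Suc n)
   \<Longrightarrow> y \<noteq> diag (Suc n) \<Longrightarrow> y \<in> skew"
proof -
  assume a: "fst m \<le> fst y" "snd m \<le> snd y" "fst y \<le> fst m + int (Suc n)" "snd y \<le> snd m + int (Suc n)"
    "y \<noteq> diag (Suc n)"
  have "valid_node y" using m_valid a(1,2) unfolding valid_node_iff by simp
  then have "y \<in> lam" using in_lam_below_top a(3,4,5) by blast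
  moreover have "y \<notin> mu" using notin_mu_above_m a(1,2) by blast
  ultimately show ?thesis unfolding skew_def by blast
qed

lemma diag_in_skew: "t \<le> n \<Longrightarrow> diag t \<in> skew"
  by (rule in_skew_between) (auto simp: diag_def)

lemma NW_diag_in_skew: "t \<le> n \<Longrightarrow> NW (diag t) \<in> skew"
  by (rule in_skew_between) (auto simp: diag_def NW_def)

lemma NE_diag_in_skew: "t \<le> n \<Longrightarrow> NE (diag t) \<in> skew"
  by (rule in_skew_between) (auto simp: diag_def NE_def)

lemma SW_m_notin_skew: "SW m \<notin> skew"
proof
  assume a: "SW m \<in> skew"
  then have "valid_node (SW m)" using lam_valid unfolding skew_def by blast
  then have "SW m \<in> mu" using addable_below[OF am, of "SW m"] by (simp add: node_defs prod_eq_iff)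
  then show False using a unfolding skew_def by blast
qed

lemma SE_m_notin_skew: "SE m \<notin> skew"
proof
  assume a: "SE m \<in> skew"
  then have "valid_node (SE m)" using lam_valid unfolding skew_def by blast
  then have "SE m \<in> mu" using addable_below[OF am, of "SE m"] by (simp add: node_defs prod_eq_iff)
  then show False using a unfolding skew_def by blast
qed

lemma NW_ne_m: "x \<in> skew \<Longrightarrow> NW x \<noteq> m"
proof
  assume a: "x \<in> skew" "NW x = m"
  then have "x = SE m" by (auto simp: node_defs)
  then show False using a SE_m_notin_skew by simp
qed

lemma NE_ne_m: "x \<in> skew \<Longrightarrow> NE x \<noteq> m"
proof
  assume a: "x \<in> skew" "NE x = m"
  then have "x = SW m" by (auto simp: node_defs)
  then show False using a SW_m_notin_skew by simp
qed

lemma top_notin_skew: "diag (Suc n) \<notin> skew" using top_notin_lam unfolding skew_def by blast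

lemma m_in_skew: "m \<in> skew" using diag_in_skew[of 0] diag_0 by simp

lemma skew_m_eq: "skew_m = skew - {m}" unfolding skew_m_def skew_def by blast

lemma skew_lm_eq: "skew_lm = insert (diag (Suc n)) (skew - {m})"
  unfolding skew_lm_def skew_def using top_notin_mu diag_0 diag_eq_iff[of "Suc n" 0] by auto

lemma top_in_skew_lm: "diag (Suc n) \<in> skew_lm" using skew_lm_eq by simp

lemma m_notin_skew_lm: "m \<notin> skew_lm" using skew_lm_eq diag_0 diag_eq_iff[of "Suc n" 0] by auto

lemma m_notin_skew_m: "m \<notin> skew_m" using skew_m_eq by simp

lemma in_skew_m: "u \<in> skew \<Longrightarrow> u \<noteq> m \<Longrightarrow> u \<in> skew_m" using skew_m_eq by simp

lemma convex_skew: "convex_region skew" unfolding skew_def by (rule convex_region_skew[OF plam pmu])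

lemma convex_skew_m: "convex_region skew_m" unfolding skew_m_def
  by (rule convex_region_skew[OF plam]) (use am in \<open>simp add: addable_def\<close>)

lemma convex_skew_lm: "convex_region skew_lm" unfolding skew_lm_def
  by (rule convex_region_skew) (use am al in \<open>simp_all add: addable_def diag_def\<close>)

lemma diag_valleys:
  assumes tl: "dyck_tiling_on skew P" and lc: "locally_linked skew P"
  shows "t \<le> n \<Longrightarrow> linked P (NW (diag t)) (diag t) \<and> linked P (diag t) (NE (diag t))"
proof (induction t)
  case 0
  have e: "diag 0 \<in> skew" "NW (diag 0) \<in> skew" "NE (diag 0) \<in> skew" using diag_in_skew NW_diag_in_skew NE_diag_in_skew by auto
  obtain w where w: "linked P w (diag 0)" using linked_pred_if_NW[OF lc e(1,2)] by blast
  have "w \<noteq> SW (diag 0)" using linkedD[OF tl w] SW_m_notin_skew diag_0 by auto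
  then have "w = NW (diag 0)" using linked_pred_cases[OF tl w] by blast
  moreover obtain y where y: "linked P (diag 0) y" using linked_succ_if_NE[OF lc e(1,3)] by blast
  moreover have "y \<noteq> SE (diag 0)" using linkedD[OF tl y] SE_m_notin_skew diag_0 by auto
  then have "y = NE (diag 0)" using linkedD[OF tl y] by blast
  ultimately show ?case using w y by simp
next
  case (Suc s)
  then have IH: "linked P (NW (diag s)) (diag s)" "linked P (diag s) (NE (diag s))" by auto
  have e: "diag (Suc s) \<in> skew" "NW (diag (Suc s)) \<in> skew" "NE (diag (Suc s)) \<in> skew" using diag_in_skew NW_diag_in_skew NE_diag_in_skew Suc.prems by auto
  obtain w where w: "linked P w (diag (Suc s))" using linked_pred_if_NW[OF lc e(1,2)] by blast
  have "w \<noteq> SW (diag (Suc s))"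
  proof
    assume "w = SW (diag (Suc s))"
    then have "linked P (NW (diag s)) (diag (Suc s))" using w SW_diag_Suc by simp
    then have "diag s = diag (Suc s)" by (rule linked_succ_unique[OF tl IH(1)])
    then show False using diag_eq_iff by simp
  qed
  then have "w = NW (diag (Suc s))" using linked_pred_cases[OF tl w] by blast
  moreover obtain y where y: "linked P (diag (Suc s)) y" using linked_succ_if_NE[OF lc e(1,3)] by blast
  moreover have "y \<noteq> SE (diag (Suc s))"
  proof
    assume "y = SE (diag (Suc s))"
    then have "linked P (diag (Suc s)) (NE (diag s))" using y SE_diag_Suc by simp
    then have "diag (Suc s) = diag s" by (rule linked_pred_unique[OF tl _ IH(2)])
    then show False using diag_eq_iff by simp
  qed
  then have "y = NE (diag (Suc s))" using linkedD[OF tl y] by blast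
  ultimately show ?case using w y by simp
qed

lemma diag_peaks:
  assumes tl: "dyck_tiling_on E Q" and lc: "locally_linked E Q" and cv: "convex_region E" and m0: "m \<notin> E"
    and R: "\<And>t. 1 \<le> t \<Longrightarrow> t \<le> r \<Longrightarrow> diag t \<in> E \<and> SW (diag t) \<in> E \<and> SE (diag t) \<in> E"
  shows "1 \<le> t \<Longrightarrow> t \<le> r \<Longrightarrow> linked Q (SW (diag t)) (diag t) \<and> linked Q (diag t) (SE (diag t))"
proof (induction t)
  case 0 then show ?case by simp
next
  case (Suc s)
  have e: "diag (Suc s) \<in> E" "SW (diag (Suc s)) \<in> E" "SE (diag (Suc s)) \<in> E" using R Suc.prems by auto
  have IH: "s \<ge> 1 \<Longrightarrow> linked Q (SW (diag s)) (diag s) \<and> linked Q (diag s) (SE (diag s))" using Suc by simp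
  have "NW (SE (diag (Suc s))) \<in> E" using e NW_SE by simp
  then obtain w where w: "linked Q w (SE (diag (Suc s)))" using linked_pred_if_NW[OF lc e(3)] by blast
  have "w \<noteq> SW (SE (diag (Suc s)))"
  proof
    assume h: "w = SW (SE (diag (Suc s)))"
    then have wc: "w = diag s" using SW_SE down_diag by simp
    show False
    proof (cases "s = 0")
      case True
      then show False using linkedD[OF tl w] wc diag_0 m0 by simp
    next
      case False
      then have "linked Q (diag s) (SE (diag s))" using IH by simp
      then have "SE (diag (Suc s)) = SE (diag s)" using linked_succ_unique[OF tl] w wc by metis
      then show False using diag_eq_iff by (simp add: diag_def node_defs)
    qed
  qed
  then have "w = NW (SE (diag (Suc s)))" using linked_pred_cases[OF tl w] by blast
  then have L1: "linked Q (diag (Suc s)) (SE (diag (Suc s)))" using w NW_SE by simp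
  have "NE (SW (diag (Suc s))) \<in> E" using e NE_SW by simp
  then obtain y where y: "linked Q (SW (diag (Suc s))) y" using linked_succ_if_NE[OF lc e(2)] by blast
  have "y \<noteq> SE (SW (diag (Suc s)))"
  proof
    assume h: "y = SE (SW (diag (Suc s)))"
    then have yc: "y = diag s" using SE_SW down_diag by simp
    show False
    proof (cases "s = 0")
      case True
      then show False using linkedD[OF tl y] yc diag_0 m0 by simp
    next
      case False
      then have "linked Q (SW (diag s)) (diag s)" using IH by simp
      then have "SW (diag (Suc s)) = SW (diag s)" using linked_pred_unique[OF tl] y yc by metis
      then show False using diag_eq_iff by (simp add: diag_def node_defs)
    qed
  qed
  then have "y = NE (SW (diag (Suc s)))" using linkedD[OF tl y] by blast
  then have L2: "linked Q (SW (diag (Suc s))) (diag (Suc s))" using y NE_SW by simp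
  show ?case using L1 L2 by simp
qed

lemma diag_peaks_lm:
  assumes tl: "dyck_tiling_on skew_lm Q" and lc: "locally_linked skew_lm Q"
  shows "1 \<le> t \<Longrightarrow> t \<le> Suc n \<Longrightarrow> linked Q (SW (diag t)) (diag t) \<and> linked Q (diag t) (SE (diag t))"
proof (rule diag_peaks[OF tl lc convex_skew_lm m_notin_skew_lm])
  fix t assume t: "1 \<le> t" "t \<le> Suc n"
  then obtain s where s: "t = Suc s" "s \<le> n" by (cases t) auto
  have ct: "diag t \<in> skew_lm"
  proof (cases "s = n")
    case True then show ?thesis using s top_in_skew_lm by simp
  next
    case False
    then have "diag t \<in> skew" using diag_in_skew s by simp
    moreover have "diag t \<noteq> m" using diag_0 diag_eq_iff[of t 0] s by simp
    ultimately show ?thesis using skew_lm_eq by simp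
  qed
  have "SW (diag t) = NW (diag s)" using SW_diag_Suc s by simp
  moreover have "NW (diag s) \<in> skew" "NW (diag s) \<noteq> m" using NW_diag_in_skew[OF s(2)] NW_ne_m[OF diag_in_skew[OF s(2)]] by auto
  ultimately have sw: "SW (diag t) \<in> skew_lm" using skew_lm_eq by simp
  have "SE (diag t) = NE (diag s)" using SE_diag_Suc s by simp
  moreover have "NE (diag s) \<in> skew" "NE (diag s) \<noteq> m" using NE_diag_in_skew[OF s(2)] NE_ne_m[OF diag_in_skew[OF s(2)]] by auto
  ultimately have se: "SE (diag t) \<in> skew_lm" using skew_lm_eq by simp
  show "diag t \<in> skew_lm \<and> SW (diag t) \<in> skew_lm \<and> SE (diag t) \<in> skew_lm" using ct sw se by simp
qed

lemma diag_peaks_m: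
  assumes tl: "dyck_tiling_on skew_m Q" and lc: "locally_linked skew_m Q"
  shows "1 \<le> t \<Longrightarrow> t \<le> n \<Longrightarrow> linked Q (SW (diag t)) (diag t) \<and> linked Q (diag t) (SE (diag t))"
proof (rule diag_peaks[OF tl lc convex_skew_m m_notin_skew_m])
  fix t assume t: "1 \<le> t" "t \<le> n"
  then obtain s where s: "t = Suc s" "s < n" by (cases t) auto
  have "diag t \<in> skew" using diag_in_skew t by simp
  moreover have "diag t \<noteq> m" using diag_0 diag_eq_iff[of t 0] s by simp
  ultimately have ct: "diag t \<in> skew_m" using in_skew_m by simp
  have sn: "s \<le> n" using s by simp
  have "SW (diag t) = NW (diag s)" using SW_diag_Suc s by simp
  then have sw: "SW (diag t) \<in> skew_m" using in_skew_m[OF NW_diag_in_skew[OF sn] NW_ne_m[OF diag_in_skew[OF sn]]] by simp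
  have "SE (diag t) = NE (diag s)" using SE_diag_Suc s by simp
  then have se: "SE (diag t) \<in> skew_m" using in_skew_m[OF NE_diag_in_skew[OF sn] NE_ne_m[OF diag_in_skew[OF sn]]] by simp
  show "diag t \<in> skew_m \<and> SW (diag t) \<in> skew_m \<and> SE (diag t) \<in> skew_m" using ct sw se by simp
qed

definition lift :: "nat \<Rightarrow> node \<Rightarrow> node" where "lift k x = (if x \<in> diag ` {..<k} then up x else x)"

definition lower :: "nat \<Rightarrow> node \<Rightarrow> node" where "lower k x = (if x \<in> diag ` {1..k} then down x else x)"

definition tilings where "tilings = {P. dyck_tiling_on skew P \<and> locally_linked skew P}"

definition tilings_low where "tilings_low = {P\<in>tilings. peak (tile_of P (diag n)) = height (diag n) + 1}"

definition tilings_m where "tilings_m = {Q. dyck_tiling_on skew_m Q \<and> locally_linked skew_m Q}"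

definition tilings_lm where "tilings_lm = {Q. dyck_tiling_on skew_lm Q \<and> locally_linked skew_lm Q}"

lemma column_lift[simp]: "column (lift k x) = column x" by (simp add: lift_def)

lemma column_lower[simp]: "column (lower k x) = column x" by (simp add: lower_def)

lemma lift_diag: "t < k \<Longrightarrow> lift k (diag t) = diag (Suc t)" by (auto simp: lift_def up_diag)

lemma lift_id: assumes "\<And>t. t < k \<Longrightarrow> x \<noteq> diag t" shows "lift k x = x"
proof -
  have "x \<notin> diag ` {..<k}"
  proof
    assume "x \<in> diag ` {..<k}"
    then obtain t where "t \<in> {..<k}" "x = diag t" by blast
    then show False using assms[of t] by simp
  qed
  then show ?thesis unfolding lift_def by simp
qed

lemma lower_diag: "t < k \<Longrightarrow> lower k (diag (Suc t)) = diag t" by (auto simp: lower_def down_diag)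

lemma lower_id: assumes "\<And>t. 1 \<le> t \<Longrightarrow> t \<le> k \<Longrightarrow> x \<noteq> diag t" shows "lower k x = x"
proof -
  have "x \<notin> diag ` {1..k}"
  proof
    assume "x \<in> diag ` {1..k}"
    then obtain t where "t \<in> {1..k}" "x = diag t" by blast
    then show False using assms[of t] by simp
  qed
  then show ?thesis unfolding lower_def by simp
qed

lemma lift_id_off_diag: "u \<noteq> diag 0 \<Longrightarrow> (\<And>t. t < k \<Longrightarrow> u \<noteq> diag (Suc t)) \<Longrightarrow> lift k u = u"
  by (rule lift_id) (metis less_Suc_eq_0_disj less_Suc_eq)

lemma lower_id_off_diag: "u \<noteq> diag (Suc k) \<Longrightarrow> (\<And>t. t \<le> k \<Longrightarrow> u \<noteq> diag t) \<Longrightarrow> lower (Suc k) u = u"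
  by (rule lower_id) (metis le_Suc_eq)

lemma not_diag: "column x \<noteq> column m \<Longrightarrow> x \<noteq> diag t" by auto

lemma lower_lift: "x \<noteq> diag k \<Longrightarrow> lower k (lift k x) = x"
proof (cases "\<exists>t<k. x = diag t")
  case True
  then obtain t where t: "t < k" "x = diag t" by blast
  then show ?thesis using lift_diag lower_diag by simp
next
  case False
  assume xk: "x \<noteq> diag k"
  have "lift k x = x" using False by (auto intro: lift_id)
  moreover have "lower k x = x"
  proof (rule lower_id)
    fix t assume "1 \<le> t" "t \<le> k"
    show "x \<noteq> diag t"
    proof (cases "t = k")
      case True then show ?thesis using xk by simp
    next
      case False2: False
      then have "t < k" using \<open>t \<le> k\<close> by simp
      then show ?thesis using False by blast
    qed
  qed
  ultimately show ?thesis by simp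
qed

lemma lift_lower: "x \<noteq> diag 0 \<Longrightarrow> lift k (lower k x) = x"
proof (cases "\<exists>t<k. x = diag (Suc t)")
  case True
  then obtain t where t: "t < k" "x = diag (Suc t)" by blast
  then show ?thesis using lift_diag lower_diag by simp
next
  case False
  assume x0: "x \<noteq> diag 0"
  have d: "lower k x = x"
  proof (rule lower_id)
    fix t assume "1 \<le> t" "t \<le> k"
    then obtain s where s: "t = Suc s" "s < k" by (cases t) auto
    then show "x \<noteq> diag t" using False by blast
  qed
  have "lift k x = x"
  proof (rule lift_id)
    fix t assume "t < k"
    show "x \<noteq> diag t"
    proof (cases t)
      case 0 then show ?thesis using x0 by simp
    next
      case (Suc s) then show ?thesis using False \<open>t < k\<close> by auto
    qed
  qed
  then show ?thesis using d by simp
qed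

lemma inj_on_lift: "inj_on (lift k) (E - {diag k})"
proof (rule inj_on_inverseI)
  fix x assume "x \<in> E - {diag k}" then show "lower k (lift k x) = x" using lower_lift by simp
qed

lemma inj_on_lower: "inj_on (lower k) (E - {diag 0})"
proof (rule inj_on_inverseI)
  fix x assume "x \<in> E - {diag 0}" then show "lift k (lower k x) = x" using lift_lower by simp
qed

lemma lift_image:
  assumes X: "\<And>t. t < Suc k \<Longrightarrow> diag t \<in> X"
  shows "lift (Suc k) ` X = insert (diag (Suc k)) (X - {diag 0})"
proof
  show "lift (Suc k) ` X \<subseteq> insert (diag (Suc k)) (X - {diag 0})"
  proof
    fix y assume "y \<in> lift (Suc k) ` X"
    then obtain x where x: "x \<in> X" "y = lift (Suc k) x" by blast
    show "y \<in> insert (diag (Suc k)) (X - {diag 0})"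
    proof (cases "\<exists>t<Suc k. x = diag t")
      case True
      then obtain t where t: "t < Suc k" "x = diag t" by blast
      then have "y = diag (Suc t)" using x lift_diag by simp
      then show ?thesis using X[of "Suc t"] t diag_eq_iff by (cases "t = k") auto
    next
      case False
      then have "y = x" "x \<noteq> diag 0" using x lift_id by auto
      then show ?thesis using x by simp
    qed
  qed
  show "insert (diag (Suc k)) (X - {diag 0}) \<subseteq> lift (Suc k) ` X"
  proof
    fix y assume y: "y \<in> insert (diag (Suc k)) (X - {diag 0})"
    show "y \<in> lift (Suc k) ` X"
    proof (cases "\<exists>t<Suc k. y = diag (Suc t)")
      case True
      then obtain t where "t < Suc k" "y = diag (Suc t)" by blast
      then show ?thesis using X lift_diag by (metis image_eqI)
    next
      case False
      then have "y \<in> X" "y \<noteq> diag 0" using y by auto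
      moreover have "lift (Suc k) y = y" by (rule lift_id_off_diag) (use False \<open>y \<noteq> diag 0\<close> in auto)
      ultimately show ?thesis by (metis image_eqI)
    qed
  qed
qed

lemma lift_skew: "lift (Suc n) ` skew = skew_lm"
  using lift_image[of n skew] diag_in_skew skew_lm_eq diag_0 by simp

lemma lift_skew_m: "lift n ` (skew - {diag n}) = skew_m"
proof (cases n)
  case 0
  then show ?thesis using skew_m_eq diag_0 by (simp add: lift_def)
next
  case (Suc k)
  have "lift n ` (skew - {diag n}) = insert (diag n) (skew - {diag n} - {diag 0})"
    using lift_image[of k "skew - {diag n}"] diag_in_skew diag_eq_iff Suc by simp
  also have "\<dots> = skew - {diag 0}" using diag_in_skew[of n] diag_eq_iff Suc by auto
  finally show ?thesis using skew_m_eq diag_0 by simp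
qed

lemma lower_skew_lm: "lower (Suc n) ` skew_lm = skew"
proof -
  have "lower (Suc n) ` skew_lm = lower (Suc n) ` lift (Suc n) ` skew" using lift_skew by simp
  also have "\<dots> = (\<lambda>x. lower (Suc n) (lift (Suc n) x)) ` skew" by (simp add: image_comp)
  also have "\<dots> = (\<lambda>x. x) ` skew"
    by (rule image_cong[OF refl]) (use lower_lift top_notin_skew in metis)
  finally show ?thesis by simp
qed

lemma lower_skew_m: "lower n ` skew_m = skew - {diag n}"
proof -
  have "lower n ` skew_m = lower n ` lift n ` (skew - {diag n})" using lift_skew_m by simp
  also have "\<dots> = (\<lambda>x. lower n (lift n x)) ` (skew - {diag n})" by (simp add: image_comp)
  also have "\<dots> = (\<lambda>x. x) ` (skew - {diag n})"
    by (rule image_cong[OF refl]) (use lower_lift in blast)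
  finally show ?thesis by simp
qed

lemma inj_on_lower_skew_lm: "inj_on (lower (Suc n)) skew_lm"
proof -
  have "diag 0 \<notin> skew_lm" using m_notin_skew_lm diag_0 by simp
  then have "skew_lm = skew_lm - {diag 0}" by simp
  then show ?thesis using inj_on_lower[of "Suc n" skew_lm] by simp
qed

lemma lift_image_off_diag: "(\<And>x. x \<in> T \<Longrightarrow> column x \<noteq> column m) \<Longrightarrow> lift k ` T = T"
proof -
  assume a: "\<And>x. x \<in> T \<Longrightarrow> column x \<noteq> column m"
  have "lift k x = x" if "x \<in> T" for x
  proof -
    have "column x \<noteq> column m" using a that by blast
    then show ?thesis by (intro lift_id not_diag)
  qed
  then show ?thesis by simp
qed

lemma lower_image_off_diag: "(\<And>x. x \<in> T \<Longrightarrow> column x \<noteq> column m) \<Longrightarrow> lower k ` T = T"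
proof -
  assume a: "\<And>x. x \<in> T \<Longrightarrow> column x \<noteq> column m"
  have "lower k x = x" if "x \<in> T" for x
  proof -
    have "column x \<noteq> column m" using a that by blast
    then show ?thesis by (intro lower_id not_diag)
  qed
  then show ?thesis by simp
qed

lemma linked_lift:
  "linked ((`) (lift k) ` P) u v \<longleftrightarrow> (\<exists>x y. linked P x y \<and> u = lift k x \<and> v = lift k y)"
  by (rule linked_image) simp

lemma linked_lower:
  "linked ((`) (lower k) ` P) u v \<longleftrightarrow> (\<exists>x y. linked P x y \<and> u = lower k x \<and> v = lower k y)"
  by (rule linked_image) simp

lemma diag_tile_peak:
  assumes P: "P \<in> tilings" and t: "t < n"
  shows "height (diag t) + 2 \<le> peak (tile_of P (diag t))"
proof -
  have tl: "dyck_tiling_on skew P" and lc: "locally_linked skew P" using P unfolding tilings_def by auto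
  let ?T = "tile_of P (diag t)"
  have T: "?T \<in> P" "diag t \<in> ?T" using tile_of_mem[OF tl diag_in_skew] t by auto
  have pT: "column_path ?T" using tiling_column_path[OF tl T(1)] .
  have V: "linked P (NW (diag t)) (diag t)" using diag_valleys[OF tl lc] t by simp
  have NWT: "NW (diag t) \<in> ?T" using linked_pred_in_tile[OF tl V T] .
  have tn: "Suc t \<le> n" using t by simp
  let ?T' = "tile_of P (diag (Suc t))"
  have T': "?T' \<in> P" "diag (Suc t) \<in> ?T'" using tile_of_mem[OF tl diag_in_skew[OF tn]] by auto
  have V': "linked P (NW (diag (Suc t))) (diag (Suc t))" using diag_valleys[OF tl lc tn] by auto
  have NWT': "NW (diag (Suc t)) \<in> ?T'" using linked_pred_in_tile[OF tl V' T'(1) T'(2)] .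
  have ne: "?T \<noteq> ?T'"
  proof
    assume "?T = ?T'"
    then have "diag (Suc t) = diag t" using column_path_column_inj[OF pT] T'(2) T(2) by simp
    then show False using diag_eq_iff by simp
  qed
  have M': "height (diag t) + 3 \<le> peak ?T'"
    using peak_ge[OF tiling_column_path[OF tl T'(1)] NWT'] height_diag[of t] height_diag[of "Suc t"] by simp
  show ?thesis
  proof (rule ccontr)
    assume "\<not> height (diag t) + 2 \<le> peak ?T"
    then have H1: "peak ?T \<le> height (diag t) + 1" by simp
    have H2: "height (diag t) + 1 + 2 \<le> peak ?T'" using M' by simp
    have "up (NW (diag t)) \<in> ?T'" using NWT' NW_up up_diag by metis
    then show False using up_not_in_higher_tile[OF tl lc convex_skew T(1) T'(1) ne H1 H2 NWT] by blast
  qed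
qed

lemma lift_tile_dyck_at_diag:
  assumes P: "P \<in> tilings" and T: "T \<in> P" and t: "t \<le> n" "diag t \<in> T" and k: "t < k"
    and h: "height (diag t) + 2 \<le> peak T"
  shows "is_dyck_tile (lift k ` T)"
proof -
  have tl: "dyck_tiling_on skew P" and lc: "locally_linked skew P" using P unfolding tilings_def by auto
  have pT: "column_path T" using tiling_column_path[OF tl T] .
  have V: "linked P (NW (diag t)) (diag t)" "linked P (diag t) (NE (diag t))" using diag_valleys[OF tl lc t(1)] by auto
  have "lift k x = x" if "x \<in> T" "x \<noteq> diag t" for x
    by (rule lift_id) (use column_path_column_inj[OF pT that(1) t(2)] that(2) in force)
  then have "lift k ` T = insert (up (diag t)) (T - {diag t})"
    using image_replace_one[OF t(2)] lift_diag[OF k] up_diag by simp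
  moreover have "valid_node (up (diag t))"
    using lam_valid[of "diag t"] diag_in_skew[OF t(1)] unfolding skew_def by (simp add: valid_node_iff up_def)
  ultimately show ?thesis
    using dyck_tile_raise_valley[OF tiling_dyck_tile[OF tl T] t(2) _ _ _ h]
      linked_pred_in_tile[OF tl V(1) T t(2)] linked_succ_in_tile[OF tl V(2) T t(2)] by simp
qed

lemma diag_tile_peak_not_low:
  assumes P: "P \<in> tilings - tilings_low" and t: "t \<le> n"
  shows "height (diag t) + 2 \<le> peak (tile_of P (diag t))"
proof (cases "t = n")
  case False
  then show ?thesis using diag_tile_peak P t by simp
next
  case True
  have tl: "dyck_tiling_on skew P" and lc: "locally_linked skew P" using P unfolding tilings_def by auto
  let ?T = "tile_of P (diag n)"
  have T: "?T \<in> P" "diag n \<in> ?T" using tile_of_mem[OF tl diag_in_skew] by auto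
  have "NW (diag n) \<in> ?T" using linked_pred_in_tile[OF tl _ T] diag_valleys[OF tl lc, of n] by auto
  then have "height (NW (diag n)) \<le> peak ?T" by (rule peak_ge[OF tiling_column_path[OF tl T(1)]])
  moreover have "peak ?T \<noteq> height (diag n) + 1" using P unfolding tilings_low_def by auto
  ultimately show ?thesis using True by simp
qed

lemma lift_tile_dyck:
  assumes P: "P \<in> tilings" and T: "T \<in> P" and k: "k \<le> Suc n"
    and h: "\<And>t. t < k \<Longrightarrow> diag t \<in> T \<Longrightarrow> height (diag t) + 2 \<le> peak T"
  shows "is_dyck_tile (lift k ` T)"
proof (cases "\<exists>t<k. diag t \<in> T")
  case True
  then obtain t where t: "t < k" "diag t \<in> T" by blast
  show ?thesis by (rule lift_tile_dyck_at_diag[OF P T _ t(2) t(1) h[OF t]]) (use t k in simp)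
next
  case False
  then have "lift k x = x" if "x \<in> T" for x using that by (intro lift_id) blast
  then have "lift k ` T = T" by simp
  then show ?thesis using tiling_dyck_tile[of skew P T] P T unfolding tilings_def by simp
qed

lemma lower_tile_dyck:
  assumes tl: "dyck_tiling_on E Q" and T: "T \<in> Q" and k: "k \<le> Suc n"
    and pk: "\<And>t. 1 \<le> t \<Longrightarrow> t \<le> k \<Longrightarrow> linked Q (SW (diag t)) (diag t) \<and> linked Q (diag t) (SE (diag t))"
  shows "is_dyck_tile (lower k ` T) \<and> peak (lower k ` T) = peak T"
proof (cases "\<exists>t. 1 \<le> t \<and> t \<le> k \<and> diag t \<in> T")
  case False
  then have "lower k x = x" if "x \<in> T" for x using that by (intro lower_id) auto
  then have "lower k ` T = T" by simp
  then show ?thesis using tiling_dyck_tile[OF tl T] by simp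
next
  case True
  then obtain s where s: "s < k" "diag (Suc s) \<in> T" by (metis Suc_le_lessD not0_implies_Suc not_one_le_zero)
  have pT: "column_path T" using tiling_column_path[OF tl T] .
  have V: "linked Q (SW (diag (Suc s))) (diag (Suc s))" "linked Q (diag (Suc s)) (SE (diag (Suc s)))"
    using pk[of "Suc s"] s(1) by auto
  have "lower k x = x" if "x \<in> T" "x \<noteq> diag (Suc s)" for x
    by (rule lower_id) (use column_path_column_inj[OF pT that(1) s(2)] that(2) in force)
  then have "lower k ` T = insert (down (diag (Suc s))) (T - {diag (Suc s)})"
    using image_replace_one[OF s(2)] lower_diag[OF s(1)] down_diag by simp
  moreover have "valid_node (down (diag (Suc s)))"
    using diag_in_skew[of s] s(1) k lam_valid down_diag unfolding skew_def by simp
  ultimately show ?thesis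
    using dyck_tile_lower_peak[OF tiling_dyck_tile[OF tl T] s(2)]
      linked_pred_in_tile[OF tl V(1) T s(2)] linked_succ_in_tile[OF tl V(2) T s(2)] by simp
qed

lemma lower_tile_dyck_lm:
  assumes Q: "Q \<in> tilings_lm" and T: "T \<in> Q"
  shows "is_dyck_tile (lower (Suc n) ` T) \<and> peak (lower (Suc n) ` T) = peak T"
proof -
  have tl: "dyck_tiling_on skew_lm Q" and lc: "locally_linked skew_lm Q" using Q unfolding tilings_lm_def by auto
  show ?thesis by (rule lower_tile_dyck[OF tl T order_refl diag_peaks_lm[OF tl lc]])
qed

lemma lift_linked_pred:
  assumes P: "P \<in> tilings" and u: "u \<in> skew_lm" "NW u \<in> skew_lm"
  shows "\<exists>x y. linked P x y \<and> u = lift (Suc n) y"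
proof -
  have tl: "dyck_tiling_on skew P" and lc: "locally_linked skew P" using P unfolding tilings_def by auto
  show ?thesis
  proof (cases "\<exists>t\<le>n. u = diag (Suc t)")
    case True
    then obtain t where t: "t \<le> n" "u = diag (Suc t)" by blast
    have "linked P (NW (diag t)) (diag t)" using diag_valleys[OF tl lc t(1)] by blast
    moreover have "lift (Suc n) (diag t) = u" using lift_diag t by simp
    ultimately show ?thesis by metis
  next
    case False
    then have uD: "u \<in> skew" "u \<noteq> m" using u skew_lm_eq by auto
    have gu: "lift (Suc n) u = u" by (rule lift_id_off_diag) (use uD(2) diag_0 False in auto)
    show ?thesis
    proof (cases "NW u \<in> skew")
      case True
      then obtain w where "linked P w u" using linked_pred_if_NW[OF lc uD(1)] by blast
      then show ?thesis using gu by metis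
    next
      case False
      then have "NW u = diag (Suc n)" using u skew_lm_eq by auto
      then have "u = NE (diag n)" using SE_diag_Suc[of n] SE_NW[of u] by simp
      moreover have "linked P (diag n) (NE (diag n))" using diag_valleys[OF tl lc, of n] by simp
      moreover have "lift (Suc n) (NE (diag n)) = NE (diag n)" by (intro lift_id not_diag) simp
      ultimately show ?thesis by metis
    qed
  qed
qed

lemma lift_linked_succ:
  assumes P: "P \<in> tilings" and u: "u \<in> skew_lm" "NE u \<in> skew_lm"
  shows "\<exists>x y. linked P x y \<and> u = lift (Suc n) x"
proof -
  have tl: "dyck_tiling_on skew P" and lc: "locally_linked skew P" using P unfolding tilings_def by auto
  show ?thesis
  proof (cases "\<exists>t\<le>n. u = diag (Suc t)")
    case True
    then obtain t where t: "t \<le> n" "u = diag (Suc t)" by blast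
    have "linked P (diag t) (NE (diag t))" using diag_valleys[OF tl lc t(1)] by blast
    moreover have "lift (Suc n) (diag t) = u" using lift_diag t by simp
    ultimately show ?thesis by metis
  next
    case False
    then have uD: "u \<in> skew" "u \<noteq> m" using u skew_lm_eq by auto
    have gu: "lift (Suc n) u = u" by (rule lift_id_off_diag) (use uD(2) diag_0 False in auto)
    show ?thesis
    proof (cases "NE u \<in> skew")
      case True
      then obtain y where "linked P u y" using linked_succ_if_NE[OF lc uD(1)] by blast
      then show ?thesis using gu by metis
    next
      case False
      then have "NE u = diag (Suc n)" using u skew_lm_eq by auto
      then have "u = NW (diag n)" using SW_diag_Suc[of n] SW_NE[of u] by simp
      moreover have "linked P (NW (diag n)) (diag n)" using diag_valleys[OF tl lc, of n] by simp
      moreover have "lift (Suc n) (NW (diag n)) = NW (diag n)" by (intro lift_id not_diag) simp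
      ultimately show ?thesis by metis
    qed
  qed
qed

lemma lift_in_tilings_lm:
  assumes P: "P \<in> tilings - tilings_low"
  shows "(`) (lift (Suc n)) ` P \<in> tilings_lm"
proof -
  have tl: "dyck_tiling_on skew P" using P unfolding tilings_def by auto
  have inj: "inj_on (lift (Suc n)) skew" using inj_on_lift[of "Suc n" skew] top_notin_skew by simp
  have "is_dyck_tile (lift (Suc n) ` T)" if T: "T \<in> P" for T
  proof (rule lift_tile_dyck[OF _ T order_refl])
    show "P \<in> tilings" using P by simp
    fix t assume t: "t < Suc n" "diag t \<in> T"
    then show "height (diag t) + 2 \<le> peak T"
      using diag_tile_peak_not_low[of P t] P tile_of_eqI[OF tl T t(2)] by simp
  qed
  then have "dyck_tiling_on skew_lm ((`) (lift (Suc n)) ` P)"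
    using dyck_tiling_on_image[OF tl inj] lift_skew by simp
  moreover have "locally_linked skew_lm ((`) (lift (Suc n)) ` P)"
    by (rule locally_linked_image) (use P lift_linked_pred lift_linked_succ in auto)
  ultimately show ?thesis unfolding tilings_lm_def by simp
qed

lemma lower_linked_pred:
  assumes Q: "Q \<in> tilings_lm" and u: "u \<in> skew" "NW u \<in> skew"
  shows "\<exists>x y. linked Q x y \<and> u = lower (Suc n) y"
proof -
  have tl: "dyck_tiling_on skew_lm Q" and lc: "locally_linked skew_lm Q" using Q unfolding tilings_lm_def by auto
  show ?thesis
  proof (cases "\<exists>t\<le>n. u = diag t")
    case True
    then obtain t where t: "t \<le> n" "u = diag t" by blast
    have "linked Q (SW (diag (Suc t))) (diag (Suc t))" using diag_peaks_lm[OF tl lc, of "Suc t"] t by simp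
    moreover have "lower (Suc n) (diag (Suc t)) = u" using lower_diag t by simp
    ultimately show ?thesis by metis
  next
    case False
    have gu: "lower (Suc n) u = u" by (rule lower_id_off_diag) (use u(1) top_notin_skew False in auto)
    have "u \<in> skew_lm" "NW u \<in> skew_lm"
      using u NW_ne_m[OF u(1)] False diag_0 skew_lm_eq by auto
    then obtain w where "linked Q w u" using linked_pred_if_NW[OF lc] by blast
    then show ?thesis using gu by metis
  qed
qed

lemma lower_linked_succ:
  assumes Q: "Q \<in> tilings_lm" and u: "u \<in> skew" "NE u \<in> skew"
  shows "\<exists>x y. linked Q x y \<and> u = lower (Suc n) x"
proof -
  have tl: "dyck_tiling_on skew_lm Q" and lc: "locally_linked skew_lm Q" using Q unfolding tilings_lm_def by auto
  show ?thesis
  proof (cases "\<exists>t\<le>n. u = diag t")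
    case True
    then obtain t where t: "t \<le> n" "u = diag t" by blast
    have "linked Q (diag (Suc t)) (SE (diag (Suc t)))" using diag_peaks_lm[OF tl lc, of "Suc t"] t by simp
    moreover have "lower (Suc n) (diag (Suc t)) = u" using lower_diag t by simp
    ultimately show ?thesis by metis
  next
    case False
    have gu: "lower (Suc n) u = u" by (rule lower_id_off_diag) (use u(1) top_notin_skew False in auto)
    have "u \<in> skew_lm" "NE u \<in> skew_lm"
      using u NE_ne_m[OF u(1)] False diag_0 skew_lm_eq by auto
    then obtain y where "linked Q u y" using linked_succ_if_NE[OF lc] by blast
    then show ?thesis using gu by metis
  qed
qed

lemma lower_in_tilings:
  assumes Q: "Q \<in> tilings_lm"
  shows "(`) (lower (Suc n)) ` Q \<in> tilings - tilings_low"
proof -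
  have tl: "dyck_tiling_on skew_lm Q" using Q unfolding tilings_lm_def by auto
  let ?g = "lower (Suc n)"
  let ?P = "(`) ?g ` Q"
  have dd: "\<And>T. T \<in> Q \<Longrightarrow> is_dyck_tile (?g ` T)" using lower_tile_dyck_lm[OF Q] by blast
  have "dyck_tiling_on skew ?P" using dyck_tiling_on_image[OF tl inj_on_lower_skew_lm dd] lower_skew_lm by simp
  moreover have "locally_linked skew ?P"
    by (rule locally_linked_image) (use Q lower_linked_pred lower_linked_succ in auto)
  moreover have "peak (tile_of ?P (diag n)) \<noteq> height (diag n) + 1"
  proof -
    let ?T = "tile_of Q (diag (Suc n))"
    have T: "?T \<in> Q" "diag (Suc n) \<in> ?T" using tile_of_mem[OF tl top_in_skew_lm] by auto
    have "tile_of ?P (?g (diag (Suc n))) = ?g ` ?T" by (rule tile_of_image[OF tl inj_on_lower_skew_lm T dd])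
    then have "tile_of ?P (diag n) = ?g ` ?T" using lower_diag by simp
    moreover have "peak (?g ` ?T) = peak ?T" using lower_tile_dyck_lm[OF Q T(1)] by blast
    moreover have "height (diag (Suc n)) \<le> peak ?T" using peak_ge[OF tiling_column_path[OF tl T(1)] T(2)] .
    ultimately show ?thesis using height_diag[of n] height_diag[of "Suc n"] by simp
  qed
  ultimately show ?thesis unfolding tilings_low_def tilings_def by simp
qed

lemma bij_lift: "bij_betw (\<lambda>P. (`) (lift (Suc n)) ` P) (tilings - tilings_low) tilings_lm"
proof (rule bij_betw_byWitness[where f' = "\<lambda>Q. (`) (lower (Suc n)) ` Q"])
  show "\<forall>P\<in>tilings - tilings_low. (`) (lower (Suc n)) ` ((`) (lift (Suc n)) ` P) = P"
  proof
    fix P assume P: "P \<in> tilings - tilings_low"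
    then have tl: "dyck_tiling_on skew P" unfolding tilings_def by simp
    show "(`) (lower (Suc n)) ` ((`) (lift (Suc n)) ` P) = P"
    proof (rule image_image_inverse)
      fix x assume "x \<in> \<Union>P"
      then have "x \<noteq> diag (Suc n)" using tiling_Union[OF tl] top_notin_skew by auto
      then show "lower (Suc n) (lift (Suc n) x) = x" by (rule lower_lift)
    qed
  qed
  show "\<forall>Q\<in>tilings_lm. (`) (lift (Suc n)) ` ((`) (lower (Suc n)) ` Q) = Q"
  proof
    fix Q assume Q: "Q \<in> tilings_lm"
    then have tl: "dyck_tiling_on skew_lm Q" unfolding tilings_lm_def by simp
    show "(`) (lift (Suc n)) ` ((`) (lower (Suc n)) ` Q) = Q"
    proof (rule image_image_inverse)
      fix x assume "x \<in> \<Union>Q"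
      then have "x \<noteq> diag 0" using tiling_Union[OF tl] m_notin_skew_lm diag_0 by auto
      then show "lift (Suc n) (lower (Suc n) x) = x" by (rule lift_lower)
    qed
  qed
  show "(\<lambda>P. (`) (lift (Suc n)) ` P) ` (tilings - tilings_low) \<subseteq> tilings_lm" using lift_in_tilings_lm by blast
  show "(\<lambda>Q. (`) (lower (Suc n)) ` Q) ` tilings_lm \<subseteq> tilings - tilings_low" using lower_in_tilings by blast
qed

definition split_lift :: "node set set \<Rightarrow> node set set" where
  "split_lift P = (`) (lift n) ` (split_tile P (diag n))"

definition lower_merge :: "node set set \<Rightarrow> node set set" where
  "lower_merge Q = merge_tiles ((`) (lower n) ` Q) (diag n) (NW (diag n)) (NE (diag n))"

lemma split_halves_dyck:
  assumes P: "P \<in> tilings_low"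
  shows "is_dyck_tile {x\<in>tile_of P (diag n). column x < column (diag n)} \<and> is_dyck_tile {x\<in>tile_of P (diag n). column (diag n) < column x}
    \<and> NW (diag n) \<in> {x\<in>tile_of P (diag n). column x < column (diag n)} \<and> NE (diag n) \<in> {x\<in>tile_of P (diag n). column (diag n) < column x}"
proof -
  have tl: "dyck_tiling_on skew P" and lc: "locally_linked skew P" and MxT: "peak (tile_of P (diag n)) = height (diag n) + 1"
    using P unfolding tilings_low_def tilings_def by auto
  let ?T = "tile_of P (diag n)"
  let ?L = "{x\<in>?T. column x < column (diag n)}" and ?R = "{x\<in>?T. column (diag n) < column x}"
  have T: "?T \<in> P" "diag n \<in> ?T" using tile_of_mem[OF tl diag_in_skew] by auto
  have pT: "column_path ?T" using tiling_column_path[OF tl T(1)] .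
  have dT: "is_dyck_tile ?T" using tiling_dyck_tile[OF tl T(1)] .
  have V: "linked P (NW (diag n)) (diag n)" "linked P (diag n) (NE (diag n))" using diag_valleys[OF tl lc, of n] by auto
  have NWT: "NW (diag n) \<in> ?T" using linked_pred_in_tile[OF tl V(1) T(1) T(2)] .
  have NT: "NE (diag n) \<in> ?T" using linked_succ_in_tile[OF tl V(2) T(1) T(2)] .
  have aL: "NW (diag n) \<in> ?L" using NWT by simp
  have bR: "NE (diag n) \<in> ?R" using NT by simp
  have S: "tile_start ?T \<in> ?T" "\<And>y. y \<in> ?T \<Longrightarrow> column (tile_start ?T) \<le> column y" using tile_start_least[OF pT] by auto
  have E: "tile_end ?T \<in> ?T" "\<And>y. y \<in> ?T \<Longrightarrow> column y \<le> column (tile_end ?T)" using tile_end_greatest[OF pT] by auto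
  have hs: "height (tile_start ?T) = peak ?T" "height (tile_end ?T) = peak ?T" using dT unfolding is_dyck_tile_iff by auto
  have pL: "column_path ?L"
  proof (rule column_path_subset[OF pT])
    show "?L \<subseteq> ?T" by blast
    show "?L \<noteq> {}" using aL by blast
    fix x y z assume "x \<in> ?L" "y \<in> ?L" "z \<in> ?T" "column x \<le> column z" "column z \<le> column y"
    then show "z \<in> ?L" by simp
  qed
  have pR: "column_path ?R"
  proof (rule column_path_subset[OF pT])
    show "?R \<subseteq> ?T" by blast
    show "?R \<noteq> {}" using bR by blast
    fix x y z assume "x \<in> ?R" "y \<in> ?R" "z \<in> ?T" "column x \<le> column z" "column z \<le> column y"
    then show "z \<in> ?R" by simp
  qed
  have sL: "tile_start ?T \<in> ?L" using S(1) S(2)[OF NWT] by simp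
  have eR: "tile_end ?T \<in> ?R" using E(1) E(2)[OF NT] by simp
  have stL: "tile_start ?L = tile_start ?T" by (rule tile_start_eqI[OF pL sL]) (use S(2) in auto)
  have enL: "tile_end ?L = NW (diag n)" by (rule tile_end_eqI[OF pL aL]) auto
  have stR: "tile_start ?R = NE (diag n)" by (rule tile_start_eqI[OF pR bR]) auto
  have enR: "tile_end ?R = tile_end ?T" by (rule tile_end_eqI[OF pR eR]) (use E(2) in auto)
  have MxL: "peak ?L = peak ?T" by (rule peak_eqI[OF pL sL hs(1)]) (use peak_ge[OF pT] in auto)
  have MxR: "peak ?R = peak ?T" by (rule peak_eqI[OF pR eR hs(2)]) (use peak_ge[OF pT] in auto)
  have dL: "is_dyck_tile ?L" unfolding is_dyck_tile_iff using pL stL enL MxL hs MxT by simp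
  have dR: "is_dyck_tile ?R" unfolding is_dyck_tile_iff using pR stR enR MxR hs MxT by simp
  show ?thesis using dL dR aL bR by blast
qed

lemma split_lift_tile_dyck:
  assumes P: "P \<in> tilings_low" and W: "W \<in> split_tile P (diag n)"
  shows "is_dyck_tile (lift n ` W)"
proof -
  have PA: "P \<in> tilings" using P unfolding tilings_low_def by simp
  have tl: "dyck_tiling_on skew P" using PA unfolding tilings_def by simp
  let ?T = "tile_of P (diag n)"
  let ?L = "{x\<in>?T. column x < column (diag n)}" and ?R = "{x\<in>?T. column (diag n) < column x}"
  have T: "?T \<in> P" "diag n \<in> ?T" using tile_of_mem[OF tl diag_in_skew] by auto
  have LR: "is_dyck_tile ?L" "is_dyck_tile ?R" using split_halves_dyck[OF P] by auto
  consider "W = ?L" | "W = ?R" | "W \<in> P" "W \<noteq> ?T" using W unfolding split_tile_def by blast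
  then show ?thesis
  proof cases
    case 1
    have "lift n ` W = W" by (rule lift_image_off_diag) (use 1 in auto)
    then show ?thesis using LR 1 by simp
  next
    case 2
    have "lift n ` W = W" by (rule lift_image_off_diag) (use 2 in auto)
    then show ?thesis using LR 2 by simp
  next
    case 3
    show ?thesis
    proof (rule lift_tile_dyck[OF PA 3(1)])
      fix t assume t: "t < n" "diag t \<in> W"
      then show "height (diag t) + 2 \<le> peak W"
        using diag_tile_peak[OF PA t(1)] tile_of_eqI[OF tl 3(1) t(2)] by simp
    qed simp
  qed
qed

lemma linked_split_lift:
  assumes P: "P \<in> tilings_low"
  shows "linked (split_lift P) u v \<longleftrightarrow> (\<exists>x y. linked P x y \<and> x \<noteq> diag n \<and> y \<noteq> diag n \<and> u = lift n x \<and> v = lift n y)"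
proof -
  have tl: "dyck_tiling_on skew P" using P unfolding tilings_low_def tilings_def by simp
  have LR: "is_dyck_tile {x\<in>tile_of P (diag n). column x < column (diag n)}" "is_dyck_tile {x\<in>tile_of P (diag n). column (diag n) < column x}"
    using split_halves_dyck[OF P] by auto
  have "linked (split_lift P) u v \<longleftrightarrow> (\<exists>x y. linked (split_tile P (diag n)) x y \<and> u = lift n x \<and> v = lift n y)"
    unfolding split_lift_def by (rule linked_lift)
  also have "\<dots> \<longleftrightarrow> (\<exists>x y. linked P x y \<and> x \<noteq> diag n \<and> y \<noteq> diag n \<and> u = lift n x \<and> v = lift n y)"
    using linked_split[OF tl diag_in_skew[OF order_refl] LR] by simp
  finally show ?thesis .
qed

lemma split_lift_linked_pred:
  assumes P: "P \<in> tilings" and u: "u \<in> skew_m" "NW u \<in> skew_m"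
  shows "\<exists>x y. linked P x y \<and> x \<noteq> diag n \<and> y \<noteq> diag n \<and> u = lift n y"
proof -
  have tl: "dyck_tiling_on skew P" and lc: "locally_linked skew P" using P unfolding tilings_def by auto
  show ?thesis
  proof (cases "\<exists>t<n. u = diag (Suc t)")
    case True
    then obtain t where t: "t < n" "u = diag (Suc t)" by blast
    have "linked P (NW (diag t)) (diag t)" using diag_valleys[OF tl lc] t by simp
    moreover have "NW (diag t) \<noteq> diag n" by (rule not_diag) simp
    moreover have "diag t \<noteq> diag n" using t diag_eq_iff by simp
    moreover have "lift n (diag t) = u" using lift_diag t by simp
    ultimately show ?thesis by metis
  next
    case False
    have uD: "u \<in> skew" "u \<noteq> m" "NW u \<in> skew" using u skew_m_eq by auto
    have gu: "lift n u = u" by (rule lift_id_off_diag) (use uD(2) diag_0 False in auto)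
    have un: "u \<noteq> diag n" using False uD(2) diag_0 by (cases n) auto
    obtain w where w: "linked P w u" using linked_pred_if_NW[OF lc uD(1,3)] by blast
    have "w \<noteq> diag n"
    proof
      assume wn: "w = diag n"
      then have "u = NE (diag n) \<or> u = SE (diag n)" using linkedD[OF tl w] by simp
      then show False
      proof
        assume "u = NE (diag n)"
        then have "NW u = diag (Suc n)" using NW_NE up_diag by simp
        then show False using u top_notin_skew skew_m_eq by simp
      next
        assume "u = SE (diag n)"
        then have "NE (diag n) = SE (diag n)"
          using linked_succ_unique[OF tl _ w] diag_valleys[OF tl lc, of n] wn by simp
        then show False by (simp add: node_defs)
      qed
    qed
    then show ?thesis using w gu un by metis
  qed
qed

lemma split_lift_linked_succ:
  assumes P: "P \<in> tilings" and u: "u \<in> skew_m" "NE u \<in> skew_m"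
  shows "\<exists>x y. linked P x y \<and> x \<noteq> diag n \<and> y \<noteq> diag n \<and> u = lift n x"
proof -
  have tl: "dyck_tiling_on skew P" and lc: "locally_linked skew P" using P unfolding tilings_def by auto
  show ?thesis
  proof (cases "\<exists>t<n. u = diag (Suc t)")
    case True
    then obtain t where t: "t < n" "u = diag (Suc t)" by blast
    have "linked P (diag t) (NE (diag t))" using diag_valleys[OF tl lc] t by simp
    moreover have "NE (diag t) \<noteq> diag n" by (rule not_diag) simp
    moreover have "diag t \<noteq> diag n" using t diag_eq_iff by simp
    moreover have "lift n (diag t) = u" using lift_diag t by simp
    ultimately show ?thesis by metis
  next
    case False
    have uD: "u \<in> skew" "u \<noteq> m" "NE u \<in> skew" using u skew_m_eq by auto
    have gu: "lift n u = u" by (rule lift_id_off_diag) (use uD(2) diag_0 False in auto)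
    have un: "u \<noteq> diag n" using False uD(2) diag_0 by (cases n) auto
    obtain y where y: "linked P u y" using linked_succ_if_NE[OF lc uD(1,3)] by blast
    have "y \<noteq> diag n"
    proof
      assume yn: "y = diag n"
      then have "u = SW (diag n) \<or> u = NW (diag n)" using linked_pred_cases[OF tl y] by simp
      then show False
      proof
        assume "u = NW (diag n)"
        then have "NE u = diag (Suc n)" using NE_NW up_diag by simp
        then show False using u top_notin_skew skew_m_eq by simp
      next
        assume "u = SW (diag n)"
        then have "SW (diag n) = NW (diag n)"
          using linked_pred_unique[OF tl y] diag_valleys[OF tl lc, of n] yn by simp
        then show False using SW_ne_NW by metis
      qed
    qed
    then show ?thesis using y gu un by metis
  qed
qed

lemma split_lift_in:
  assumes P: "P \<in> tilings_low"
  shows "split_lift P \<in> tilings_m"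
proof -
  have PA: "P \<in> tilings" using P unfolding tilings_low_def by simp
  then have tl: "dyck_tiling_on skew P" unfolding tilings_def by auto
  have "dyck_tiling_on (skew - {diag n}) (split_tile P (diag n))"
    using dyck_tiling_on_split[OF tl diag_in_skew[OF order_refl]] split_halves_dyck[OF P] by blast
  then have "dyck_tiling_on skew_m (split_lift P)"
    using dyck_tiling_on_image[OF _ inj_on_lift[of n skew] split_lift_tile_dyck[OF P]] lift_skew_m
    unfolding split_lift_def by simp
  moreover have "locally_linked skew_m (split_lift P)"
    unfolding locally_linked_def linked_split_lift[OF P]
    using split_lift_linked_pred[OF PA] split_lift_linked_succ[OF PA] by blast
  ultimately show ?thesis unfolding tilings_m_def by simp
qed

text \<open>\<open>diag (Suc n)\<close> lies outside \<open>skew_m\<close>, and \<open>diag n\<close> is either missing (\<open>n = 0\<close>) or a peak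
  already linked to \<open>SW (diag n)\<close> and \<open>SE (diag n)\<close>.\<close>

lemma tilings_m_NW_diag_no_succ:
  assumes Q: "Q \<in> tilings_m"
  shows "\<not> linked Q (NW (diag n)) y"
proof
  assume y: "linked Q (NW (diag n)) y"
  have tl: "dyck_tiling_on skew_m Q" and lc: "locally_linked skew_m Q" using Q unfolding tilings_m_def by auto
  have "y \<noteq> NE (NW (diag n))" using linkedD[OF tl y] NE_NW up_diag top_notin_skew skew_m_eq by auto
  then have yc: "y = diag n" using linkedD[OF tl y] SE_NW by auto
  show False
  proof (cases n)
    case 0 then show False using linkedD[OF tl y] yc diag_0 m_notin_skew_m by simp
  next
    case (Suc s)
    then have "linked Q (SW (diag n)) (diag n)" using diag_peaks_m[OF tl lc, of n] by simp
    then have "SW (diag n) = NW (diag n)" using linked_pred_unique[OF tl] y yc by metis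
    then show False using SW_ne_NW by metis
  qed
qed

lemma tilings_m_NE_diag_no_pred:
  assumes Q: "Q \<in> tilings_m"
  shows "\<not> linked Q w (NE (diag n))"
proof
  assume w: "linked Q w (NE (diag n))"
  have tl: "dyck_tiling_on skew_m Q" and lc: "locally_linked skew_m Q" using Q unfolding tilings_m_def by auto
  have "w \<noteq> NW (NE (diag n))" using linkedD[OF tl w] NW_NE up_diag top_notin_skew skew_m_eq by auto
  then have wc: "w = diag n" using linked_pred_cases[OF tl w] SW_NE by auto
  show False
  proof (cases n)
    case 0 then show False using linkedD[OF tl w] wc diag_0 m_notin_skew_m by simp
  next
    case (Suc s)
    then have "linked Q (diag n) (SE (diag n))" using diag_peaks_m[OF tl lc, of n] by simp
    then have "SE (diag n) = NE (diag n)" using linked_succ_unique[OF tl] w wc by metis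
    then show False by (simp add: node_defs)
  qed
qed

lemma lower_tiling_m:
  assumes Q: "Q \<in> tilings_m"
  shows "dyck_tiling_on (skew - {diag n}) ((`) (lower n) ` Q)"
proof -
  have tl: "dyck_tiling_on skew_m Q" and lc: "locally_linked skew_m Q" using Q unfolding tilings_m_def by auto
  have "skew_m = skew_m - {diag 0}" using m_notin_skew_m diag_0 by simp
  then have inj: "inj_on (lower n) skew_m" using inj_on_lower[of n skew_m] by simp
  have "\<And>T. T \<in> Q \<Longrightarrow> is_dyck_tile (lower n ` T)"
    using lower_tile_dyck[OF tl _ _ diag_peaks_m[OF tl lc]] by simp
  then show ?thesis using dyck_tiling_on_image[OF tl inj] lower_skew_m by simp
qed

lemma diag_merge_position:
  "diag n \<notin> skew - {diag n}" "NW (diag n) \<in> skew - {diag n}" "NE (diag n) \<in> skew - {diag n}"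
  using NW_diag_in_skew[of n] NE_diag_in_skew[of n] by (simp_all add: not_diag)

lemma lower_merge_conditions:
  assumes Q: "Q \<in> tilings_m"
  defines "Q0 \<equiv> (`) (lower n) ` Q"
  shows "dyck_tiling_on (skew - {diag n}) Q0"
    and "\<And>x. x \<in> tile_of Q0 (NW (diag n)) \<Longrightarrow> column x < column (diag n)"
    and "\<And>x. x \<in> tile_of Q0 (NE (diag n)) \<Longrightarrow> column (diag n) < column x"
    and "tile_of Q0 (NW (diag n)) \<noteq> tile_of Q0 (NE (diag n))"
    and "is_dyck_tile (tile_of Q0 (NW (diag n)) \<union> {diag n} \<union> tile_of Q0 (NE (diag n)))"
    and "peak (tile_of Q0 (NW (diag n)) \<union> {diag n} \<union> tile_of Q0 (NE (diag n))) = height (diag n) + 1"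
proof -
  have tl: "dyck_tiling_on skew_m Q" using Q unfolding tilings_m_def by auto
  let ?a = "NW (diag n)" and ?b = "NE (diag n)"
  let ?L = "tile_of Q ?a" and ?R = "tile_of Q ?b"
  have "?a \<in> skew_m" "?b \<in> skew_m"
    using in_skew_m NW_diag_in_skew NE_diag_in_skew NW_ne_m NE_ne_m diag_in_skew by auto
  then have L: "?L \<in> Q" "?a \<in> ?L" and R: "?R \<in> Q" "?b \<in> ?R" using tile_of_mem[OF tl] by auto
  have eL: "tile_end ?L = ?a" by (rule tile_end_if_no_succ[OF tl L]) (use tilings_m_NW_diag_no_succ[OF Q] in blast)
  have sR: "tile_start ?R = ?b" by (rule tile_start_if_no_pred[OF tl R]) (use tilings_m_NE_diag_no_pred[OF Q] in blast)
  have cL: "\<And>x. x \<in> ?L \<Longrightarrow> column x < column (diag n)"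
    using tile_end_greatest[OF tiling_column_path[OF tl L(1)]] eL by fastforce
  have cR: "\<And>x. x \<in> ?R \<Longrightarrow> column (diag n) < column x"
    using tile_start_least[OF tiling_column_path[OF tl R(1)]] sR by fastforce
  show tl0: "dyck_tiling_on (skew - {diag n}) Q0" unfolding Q0_def by (rule lower_tiling_m[OF Q])
  have "lower n ` ?L = ?L" by (rule lower_image_off_diag) (use cL in \<open>metis column_diag less_irrefl\<close>)
  moreover have "lower n ` ?R = ?R" by (rule lower_image_off_diag) (use cR in \<open>metis column_diag less_irrefl\<close>)
  ultimately have "?L \<in> Q0" "?R \<in> Q0" using L(1) R(1) unfolding Q0_def by (metis imageI)+
  then have tL: "tile_of Q0 ?a = ?L" and tR: "tile_of Q0 ?b = ?R"
    using tile_of_eqI[OF tl0] L(2) R(2) by auto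
  show "\<And>x. x \<in> tile_of Q0 ?a \<Longrightarrow> column x < column (diag n)"
    and "\<And>x. x \<in> tile_of Q0 ?b \<Longrightarrow> column (diag n) < column x" using cL cR tL tR by auto
  show "tile_of Q0 ?a \<noteq> tile_of Q0 ?b" using cL R(2) tL tR by fastforce
  have "valid_node (diag n)" using diag_in_skew[of n] lam_valid unfolding skew_def by blast
  then show "is_dyck_tile (tile_of Q0 ?a \<union> {diag n} \<union> tile_of Q0 ?b)"
    and "peak (tile_of Q0 ?a \<union> {diag n} \<union> tile_of Q0 ?b) = height (diag n) + 1"
    using dyck_tile_merge[OF tiling_dyck_tile[OF tl L(1)] tiling_dyck_tile[OF tl R(1)] _ eL sR] tL tR by auto
qed

lemma linked_lower_merge:
  assumes Q: "Q \<in> tilings_m"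
  shows "linked (lower_merge Q) u v \<longleftrightarrow> (\<exists>x y. linked Q x y \<and> u = lower n x \<and> v = lower n y)
    \<or> (u = NW (diag n) \<and> v = diag n) \<or> (u = diag n \<and> v = NE (diag n))"
  unfolding lower_merge_def
  using linked_merge[OF lower_merge_conditions(1)[OF Q] diag_merge_position lower_merge_conditions(4,5,2,3)[OF Q]]
    linked_lower by simp

lemma dyck_tiling_on_lower_merge: "Q \<in> tilings_m \<Longrightarrow> dyck_tiling_on skew (lower_merge Q)"
  using dyck_tiling_on_merge[OF lower_merge_conditions(1) diag_merge_position lower_merge_conditions(4,5)]
    insert_Diff[OF diag_in_skew[OF order_refl]] unfolding lower_merge_def by simp

lemma lower_linked_pred_m:
  assumes Q: "Q \<in> tilings_m" and u: "u \<in> skew" "NW u \<in> skew" "u \<noteq> diag n"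
  shows "\<exists>x y. linked Q x y \<and> u = lower n y"
proof -
  have tl: "dyck_tiling_on skew_m Q" and lc: "locally_linked skew_m Q" using Q unfolding tilings_m_def by auto
  show ?thesis
  proof (cases "\<exists>t<n. u = diag t")
    case True
    then obtain t where t: "t < n" "u = diag t" by blast
    have "linked Q (SW (diag (Suc t))) (diag (Suc t))" using diag_peaks_m[OF tl lc, of "Suc t"] t by simp
    moreover have "lower n (diag (Suc t)) = u" using lower_diag t by simp
    ultimately show ?thesis by metis
  next
    case False
    have gu: "lower n u = u"
    proof (rule lower_id)
      fix t assume "1 \<le> t" "t \<le> n"
      then show "u \<noteq> diag t" using False u(3) by (cases "t = n") auto
    qed
    have "u \<noteq> m" using False u(3) diag_0 by (cases n) auto
    then have "u \<in> skew_m" "NW u \<in> skew_m" using in_skew_m[OF u(1)] in_skew_m[OF u(2) NW_ne_m[OF u(1)]] by auto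
    then obtain w where "linked Q w u" using linked_pred_if_NW[OF lc] by blast
    then show ?thesis using gu by metis
  qed
qed

lemma lower_linked_succ_m:
  assumes Q: "Q \<in> tilings_m" and u: "u \<in> skew" "NE u \<in> skew" "u \<noteq> diag n"
  shows "\<exists>x y. linked Q x y \<and> u = lower n x"
proof -
  have tl: "dyck_tiling_on skew_m Q" and lc: "locally_linked skew_m Q" using Q unfolding tilings_m_def by auto
  show ?thesis
  proof (cases "\<exists>t<n. u = diag t")
    case True
    then obtain t where t: "t < n" "u = diag t" by blast
    have "linked Q (diag (Suc t)) (SE (diag (Suc t)))" using diag_peaks_m[OF tl lc, of "Suc t"] t by simp
    moreover have "lower n (diag (Suc t)) = u" using lower_diag t by simp
    ultimately show ?thesis by metis
  next
    case False
    have gu: "lower n u = u"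
    proof (rule lower_id)
      fix t assume "1 \<le> t" "t \<le> n"
      then show "u \<noteq> diag t" using False u(3) by (cases "t = n") auto
    qed
    have "u \<noteq> m" using False u(3) diag_0 by (cases n) auto
    then have "u \<in> skew_m" "NE u \<in> skew_m" using in_skew_m[OF u(1)] in_skew_m[OF u(2) NE_ne_m[OF u(1)]] by auto
    then obtain y where "linked Q u y" using linked_succ_if_NE[OF lc] by blast
    then show ?thesis using gu by metis
  qed
qed

lemma lower_merge_in:
  assumes Q: "Q \<in> tilings_m"
  shows "lower_merge Q \<in> tilings_low"
proof -
  have tlD: "dyck_tiling_on skew (lower_merge Q)" by (rule dyck_tiling_on_lower_merge[OF Q])
  have "locally_linked skew (lower_merge Q)" unfolding locally_linked_def
  proof (intro conjI ballI impI)
    fix u assume u: "u \<in> skew" "NW u \<in> skew"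
    show "\<exists>w. linked (lower_merge Q) w u"
    proof (cases "u = diag n")
      case True
      then have "linked (lower_merge Q) (NW (diag n)) u" unfolding linked_lower_merge[OF Q] by blast
      then show ?thesis ..
    next
      case False
      then obtain x y where "linked Q x y" "u = lower n y" using lower_linked_pred_m[OF Q u] by blast
      then have "linked (lower_merge Q) (lower n x) u" unfolding linked_lower_merge[OF Q] by blast
      then show ?thesis ..
    qed
  next
    fix u assume u: "u \<in> skew" "NE u \<in> skew"
    show "\<exists>v. linked (lower_merge Q) u v"
    proof (cases "u = diag n")
      case True
      then have "linked (lower_merge Q) u (NE (diag n))" unfolding linked_lower_merge[OF Q] by blast
      then show ?thesis ..
    next
      case False
      then obtain x y where "linked Q x y" "u = lower n x" using lower_linked_succ_m[OF Q u] by blast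
      then have "linked (lower_merge Q) u (lower n y)" unfolding linked_lower_merge[OF Q] by blast
      then show ?thesis ..
    qed
  qed
  moreover have "tile_of (lower_merge Q) (diag n)
      = tile_of ((`) (lower n) ` Q) (NW (diag n)) \<union> {diag n} \<union> tile_of ((`) (lower n) ` Q) (NE (diag n))"
    by (rule tile_of_eqI[OF tlD]) (auto simp: lower_merge_def merge_tiles_def)
  ultimately show ?thesis
    unfolding tilings_low_def tilings_def using tlD lower_merge_conditions(6)[OF Q] by simp
qed

lemma split_lift_lower_merge:
  assumes Q: "Q \<in> tilings_m"
  shows "split_lift (lower_merge Q) = Q"
proof -
  have tl: "dyck_tiling_on skew_m Q" using Q unfolding tilings_m_def by auto
  have "split_tile (lower_merge Q) (diag n) = (`) (lower n) ` Q"
    unfolding lower_merge_def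
    by (rule split_merge[OF lower_merge_conditions(1)[OF Q] diag_merge_position lower_merge_conditions(4,5,2,3)[OF Q]])
  then have "split_lift (lower_merge Q) = (`) (lift n) ` (`) (lower n) ` Q" unfolding split_lift_def by simp
  also have "\<dots> = Q"
  proof (rule image_image_inverse)
    fix x assume "x \<in> \<Union>Q"
    then have "x \<noteq> diag 0" using tiling_Union[OF tl] m_notin_skew_m diag_0 by auto
    then show "lift n (lower n x) = x" by (rule lift_lower)
  qed
  finally show ?thesis .
qed

lemma lower_merge_split_lift:
  assumes P: "P \<in> tilings_low"
  shows "lower_merge (split_lift P) = P"
proof -
  have tl: "dyck_tiling_on skew P" using P unfolding tilings_low_def tilings_def by simp
  have LR: "is_dyck_tile {x\<in>tile_of P (diag n). column x < column (diag n)}" "is_dyck_tile {x\<in>tile_of P (diag n). column (diag n) < column x}"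
    "NW (diag n) \<in> {x\<in>tile_of P (diag n). column x < column (diag n)}" "NE (diag n) \<in> {x\<in>tile_of P (diag n). column (diag n) < column x}"
    using split_halves_dyck[OF P] by auto
  have tl1: "dyck_tiling_on (skew - {diag n}) (split_tile P (diag n))" by (rule dyck_tiling_on_split[OF tl diag_in_skew[OF order_refl] LR(1,2)])
  have "(`) (lower n) ` split_lift P = split_tile P (diag n)" unfolding split_lift_def
  proof (rule image_image_inverse)
    fix x assume "x \<in> \<Union>(split_tile P (diag n))"
    then have "x \<noteq> diag n" using tiling_Union[OF tl1] by auto
    then show "lower n (lift n x) = x" by (rule lower_lift)
  qed
  then have "lower_merge (split_lift P) = merge_tiles (split_tile P (diag n)) (diag n) (NW (diag n)) (NE (diag n))" unfolding lower_merge_def by simp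
  also have "\<dots> = P" by (rule merge_split[OF tl diag_in_skew[OF order_refl] LR])
  finally show ?thesis .
qed

lemma bij_split_lift: "bij_betw split_lift tilings_low tilings_m"
proof (rule bij_betw_byWitness[where f' = lower_merge])
  show "\<forall>P\<in>tilings_low. lower_merge (split_lift P) = P" using lower_merge_split_lift by blast
  show "\<forall>Q\<in>tilings_m. split_lift (lower_merge Q) = Q" using split_lift_lower_merge by blast
  show "split_lift ` tilings_low \<subseteq> tilings_m" using split_lift_in by blast
  show "lower_merge ` tilings_m \<subseteq> tilings_low" using lower_merge_in by blast
qed

lemma finite_skew: "finite skew" unfolding skew_def using partition_finite[OF plam] by simp

lemma card_tilings_split: "card tilings = card tilings_m + card tilings_lm"
proof -
  have "tilings \<subseteq> Pow (Pow skew)" unfolding tilings_def using tiling_subset by blast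
  then have fA: "finite tilings" using finite_skew by (meson finite_Pow_iff finite_subset)
  have sub: "tilings_low \<subseteq> tilings" unfolding tilings_low_def by blast
  have "card tilings = card (tilings_low \<union> (tilings - tilings_low))" using sub by (simp add: Un_absorb1)
  also have "\<dots> = card tilings_low + card (tilings - tilings_low)"
    by (rule card_Un_disjoint) (use fA sub finite_subset in auto)
  also have "card tilings_low = card tilings_m" by (rule bij_betw_same_card[OF bij_split_lift])
  also have "card (tilings - tilings_low) = card tilings_lm" by (rule bij_betw_same_card[OF bij_lift])
  finally show ?thesis .
qed

end

lemma e_num_eq_card:
  "mu \<subseteq> lam \<Longrightarrow> e_num lam mu = card {P. dyck_tiling_on (lam - mu) P \<and> cover_expansive_on (lam - mu) P}"
  unfolding e_num_def dyck_tiling_eq_on cover_expansive_eq_on by simp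

lemma e_num_eq_card_locally_linked:
  assumes "is_partition lam" "is_partition mu" "mu \<subseteq> lam"
  shows "e_num lam mu = card {P. dyck_tiling_on (lam - mu) P \<and> locally_linked (lam - mu) P}"
proof -
  have "convex_region (lam - mu)" by (rule convex_region_skew[OF assms(1,2)])
  then have "{P. dyck_tiling_on (lam - mu) P \<and> cover_expansive_on (lam - mu) P}
      = {P. dyck_tiling_on (lam - mu) P \<and> locally_linked (lam - mu) P}"
    using cover_expansive_iff_locally_linked by blast
  then show ?thesis using e_num_eq_card[OF assms(3)] by simp
qed

theorem (in diagonal_pair) e_num_diagonal:
  "e_num lam mu = e_num lam (insert m mu) + e_num (insert (diag (Suc n)) lam) (insert m mu)"
proof -
  have pmu': "is_partition (insert m mu)" and plam': "is_partition (insert (diag (Suc n)) lam)"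
    using am al unfolding addable_def diag_def by auto
  have "insert m mu \<subseteq> lam" using sub m_in_skew unfolding skew_def by blast
  then have "e_num lam (insert m mu) = card tilings_m"
    and "e_num (insert (diag (Suc n)) lam) (insert m mu) = card tilings_lm"
    unfolding tilings_m_def skew_m_def tilings_lm_def skew_lm_def
    by (auto intro!: e_num_eq_card_locally_linked plam pmu' plam')
  moreover have "e_num lam mu = card tilings"
    unfolding tilings_def skew_def by (rule e_num_eq_card_locally_linked[OF plam pmu sub])
  ultimately show ?thesis using card_tilings_split by simp
qed

lemma same_column_comparable:
  assumes "column x = column y"
  obtains "fst x \<le> fst y" "snd x \<le> snd y" | "fst y \<le> fst x" "snd y \<le> snd x"
  using assms unfolding column_def by linarith

lemma addable_same_column_not_subset:
  assumes plam: "is_partition lam" and pmu: "is_partition mu" and al: "addable lam l" and am: "addable mu m"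
    and col: "column l = column m" and nsub: "\<not> mu \<subseteq> lam"
  shows "\<not> insert m mu \<subseteq> insert l lam"
proof
  assume sub': "insert m mu \<subseteq> insert l lam"
  have vl: "valid_node l" and llam: "l \<notin> lam" and vm: "valid_node m" and mmu: "m \<notin> mu"
    using al am unfolding addable_def by auto
  have lmu: "l \<in> mu" using nsub sub' by blast
  then have mlam: "m \<in> lam" using sub' mmu by blast
  from same_column_comparable[OF col] show False
  proof cases
    case 1
    then have "l \<in> lam" using partition_down_closed[OF plam mlam, of l] vl unfolding valid_node_def by auto
    then show False using llam by simp
  next
    case 2
    then have "m \<in> mu" using partition_down_closed[OF pmu lmu, of m] vm unfolding valid_node_def by auto
    then show False using mmu by simp
  qed
qed

lemma e_num_insert_same:
  assumes "mu \<subseteq> lam" "addable lam l"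
  shows "e_num lam (insert l mu) = 0" "e_num (insert l lam) (insert l mu) = e_num lam mu"
proof -
  have llam: "l \<notin> lam" using assms(2) unfolding addable_def by blast
  then show "e_num lam (insert l mu) = 0" unfolding e_num_def by simp
  have "insert l lam - insert l mu = lam - mu" using llam by blast
  then show "e_num (insert l lam) (insert l mu) = e_num lam mu"
    using e_num_eq_card[OF assms(1)] e_num_eq_card[of "insert l mu" "insert l lam"] assms(1) by auto
qed

lemma addable_same_column_diagonal:
  assumes "mu \<subseteq> lam" "addable lam l" "addable mu m" "column l = column m" "l \<noteq> m"
  obtains n where "l = (fst m + int (Suc n), snd m + int (Suc n))"
proof -
  have "l \<notin> mu" using assms(1,2) unfolding addable_def by blast
  moreover have "l \<in> mu" if "fst l \<le> fst m" "snd l \<le> snd m"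
    using addable_below[OF assms(3)] that assms(2,5) unfolding addable_def by blast
  ultimately have "fst m < fst l" using assms(4) unfolding column_def by fastforce
  then show ?thesis
    using assms(4) that[of "nat (fst l - fst m - 1)"] unfolding column_def by (cases l) auto
qed

theorem corollary4p7:
  fixes j :: int and lam mu :: "node set" and l m :: node
  assumes "is_partition lam" and "is_partition mu"
    and "addable lam l" and "column l = j"
    and "addable mu m" and "column m = j"
  shows "e_num lam mu = e_num lam (insert m mu) + e_num (insert l lam) (insert m mu)"
proof -
  have col: "column l = column m" using assms(4,6) by simp
  show ?thesis
  proof (cases "mu \<subseteq> lam")
    case False
    then have "\<not> insert m mu \<subseteq> insert l lam"
      using addable_same_column_not_subset[OF assms(1,2,3,5) col] by blast
    then show ?thesis using False unfolding e_num_def by auto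
  next
    case sub: True
    show ?thesis
    proof (cases "l = m")
      case True
      then show ?thesis using e_num_insert_same[OF sub assms(3)] by simp
    next
      case False
      then obtain n where l: "l = (fst m + int (Suc n), snd m + int (Suc n))"
        using addable_same_column_diagonal[OF sub assms(3,5) col] by blast
      interpret diagonal_pair lam mu m n
        by unfold_locales (use assms(1,2,3,5) sub l in simp_all)
      show ?thesis using e_num_diagonal l unfolding diag_def by simp
    qed
  qed
qed

end
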